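(* Let $\lambda>0$, $\Sigma\in\mathbb{R}^{d\times d}$ symmetric positive definite, $\mu\in\mathbb{R}^d$, and let $X_1,X_2,\dots$ be i.i.d. $\mathcal{N}(0,\Sigma)$. For $L\ge1$ let \[ T_L(X_1)=\frac{\sum_{k=1}^LX_k\exp(\lambda\langle X_1,\mu\rangle\langle X_k,\mu\rangle)}{\sum_{k=1}^L\exp(\lambda\langle X_1,\mu\rangle\langle X_k,\mu\rangle)},\qquad T_\infty(X_1)=\lambda\Sigma\mu\mu^\top X_1. \] Then, as $L\to\infty$, $T_L(X_1)\to T_\infty(X_1)$ almost surely, $D_\mu T_L(X_1)\to D_\mu T_\infty(X_1)$ almost surely, and $D_\mu^2T_L(X_1)\to D_\mu^2T_\infty(X_1)$ almost surely.
   Context: $D_\mu$ and $D_\mu^2$ denote the first and second derivatives with respect to the parameter $\mu$. *)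

theory Defs
  imports "HOL-Probability.Probability"
begin

definition sym_pos_def :: "real^'d^'d \<Rightarrow> bool" where
  "sym_pos_def S \<longleftrightarrow> transpose S = S \<and> (\<forall>x. x \<noteq> 0 \<longrightarrow> x \<bullet> (S *v x) > 0)"

definition mvn_density :: "real^'d^'d \<Rightarrow> real^'d \<Rightarrow> real" where
  "mvn_density S x =
     exp (- (x \<bullet> (matrix_inv S *v x)) / 2) / sqrt ((2 * pi) ^ CARD('d) * det S)"

definition T_L :: "real \<Rightarrow> (nat \<Rightarrow> real^'d) \<Rightarrow> nat \<Rightarrow> real^'d \<Rightarrow> real^'d" where
  "T_L lam x L mu =
     (\<Sum>k\<in>{1..L}. exp (lam * (x 1 \<bullet> mu) * (x k \<bullet> mu)) *\<^sub>R x k) /\<^sub>R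
     (\<Sum>k\<in>{1..L}. exp (lam * (x 1 \<bullet> mu) * (x k \<bullet> mu)))"

definition T_inf :: "real \<Rightarrow> real^'d^'d \<Rightarrow> real^'d \<Rightarrow> real^'d \<Rightarrow> real^'d" where
  "T_inf lam S x1 mu = lam *\<^sub>R ((S ** (\<chi> i j. mu $ i * mu $ j)) *v x1)"

definition D1 :: "('a::real_normed_vector \<Rightarrow> 'b::real_normed_vector) \<Rightarrow> 'a \<Rightarrow> 'a \<Rightarrow> 'b" where
  "D1 f mu h = frechet_derivative f (at mu) h"

definition D2 :: "('a::real_normed_vector \<Rightarrow> 'b::real_normed_vector) \<Rightarrow> 'a \<Rightarrow> 'a \<Rightarrow> 'a \<Rightarrow> 'b" where
  "D2 f mu h k = frechet_derivative (\<lambda>nu. D1 f nu h) (at mu) k"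

end

theory Submission
  imports Defs
begin

(* Write theta(mu) = lam <X_1, mu> mu.  Then T_L(mu) is the mean of the empirical distribution of
   X_1, ..., X_L exponentially tilted by <., theta(mu)>, and its first two derivatives in mu are, by
   the quotient rule, the empirical tilted covariance and third cumulant, contracted with the
   derivatives of theta.  Tilting N(0, Sigma) by theta gives N(Sigma theta, Sigma), whose mean is
   T_inf(mu), whose covariance is Sigma and whose third cumulant vanishes; so it suffices that the
   tilted empirical moments of order at most 3 converge to the Gaussian ones.
   For a fixed tilt this is the strong law of large numbers (proved here from fourth moments).
   Because theta depends on X_1, the strong law is applied for all rational tilt parameters at
   once and extended to all parameters by a Lipschitz bound in the parameter, whose constant is
   again controlled by the strong law.  Coordinate monomials suffice as test functions, since
   products of inner products are multilinear in the directions. *)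

section \<open>A strong law of large numbers under fourth moment bounds\<close>

lemma (in prob_space) integrable_power_le:
  fixes f :: "'a \<Rightarrow> real"
  assumes [measurable]: "f \<in> borel_measurable M"
    and int: "integrable M (\<lambda>x. f x ^ n)" and "even n" "j \<le> n"
  shows "integrable M (\<lambda>x. f x ^ j)"
proof (rule Bochner_Integration.integrable_bound)
  show "integrable M (\<lambda>x. 1 + f x ^ n)" using int by simp
  show "AE x in M. norm (f x ^ j) \<le> norm (1 + f x ^ n)"
  proof (rule AE_I2)
    fix x
    have "\<bar>f x\<bar> ^ j \<le> 1 + \<bar>f x\<bar> ^ n"
    proof (cases "\<bar>f x\<bar> \<le> 1")
      case True
      then show ?thesis by (smt (verit) power_le_one zero_le_power abs_ge_zero)
    next
      case False
      then have "\<bar>f x\<bar> ^ j \<le> \<bar>f x\<bar> ^ n" by (intro power_increasing \<open>j \<le> n\<close>) auto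
      then show ?thesis by simp
    qed
    then show "norm (f x ^ j) \<le> norm (1 + f x ^ n)"
      using \<open>even n\<close> by (simp add: power_abs power_even_abs)
  qed
qed measurable

lemma (in prob_space) indep_var_power_add:
  fixes Y S :: "'a \<Rightarrow> real"
  assumes indep: "indep_var borel Y borel S"
    and Yn: "integrable M (\<lambda>x. Y x ^ n)" and Sn: "integrable M (\<lambda>x. S x ^ n)" and "even n"
  shows "integrable M (\<lambda>x. (Y x + S x) ^ n)"
    and "expectation (\<lambda>x. (Y x + S x) ^ n) =
      (\<Sum>k\<le>n. real (n choose k) * (expectation (\<lambda>x. Y x ^ k) * expectation (\<lambda>x. S x ^ (n - k))))"
proof -
  have [measurable]: "Y \<in> borel_measurable M" "S \<in> borel_measurable M"
    using indep_var_rv1[OF indep] indep_var_rv2[OF indep] by auto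
  have prod: "integrable M (\<lambda>x. Y x ^ k * S x ^ (n - k)) \<and>
      expectation (\<lambda>x. Y x ^ k * S x ^ (n - k)) = expectation (\<lambda>x. Y x ^ k) * expectation (\<lambda>x. S x ^ (n - k))"
    if "k \<le> n" for k
  proof -
    have "indep_var borel (\<lambda>x. Y x ^ k) borel (\<lambda>x. S x ^ (n - k))"
      using indep_var_compose[OF indep, of "\<lambda>y. y ^ k" borel "\<lambda>s. s ^ (n - k)" borel]
      by (simp add: o_def)
    moreover have "integrable M (\<lambda>x. Y x ^ k)" "integrable M (\<lambda>x. S x ^ (n - k))"
      using integrable_power_le[OF _ Yn] integrable_power_le[OF _ Sn] \<open>even n\<close> that by auto
    ultimately show ?thesis
      using indep_var_integrable indep_var_lebesgue_integral by blast
  qed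
  have expand: "(\<lambda>x. (Y x + S x) ^ n) = (\<lambda>x. \<Sum>k\<le>n. real (n choose k) * (Y x ^ k * S x ^ (n - k)))"
    by (simp add: binomial_ring mult.assoc)
  show "integrable M (\<lambda>x. (Y x + S x) ^ n)"
    unfolding expand using prod by auto
  show "expectation (\<lambda>x. (Y x + S x) ^ n) =
      (\<Sum>k\<le>n. real (n choose k) * (expectation (\<lambda>x. Y x ^ k) * expectation (\<lambda>x. S x ^ (n - k))))"
    unfolding expand using prod by (simp add: Bochner_Integration.integral_sum)
qed

lemma (in prob_space) indep_centered_moments_add:
  fixes Y S :: "'a \<Rightarrow> real"
  assumes indep: "indep_var borel Y borel S"
    and Y4: "integrable M (\<lambda>x. Y x ^ 4)" and S4: "integrable M (\<lambda>x. S x ^ 4)"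
    and Y0: "expectation Y = 0" and S0: "expectation S = 0"
  shows "expectation (\<lambda>x. (Y x + S x) ^ 2) = expectation (\<lambda>x. Y x ^ 2) + expectation (\<lambda>x. S x ^ 2)"
    and "expectation (\<lambda>x. (Y x + S x) ^ 4) = expectation (\<lambda>x. Y x ^ 4)
      + 6 * (expectation (\<lambda>x. Y x ^ 2) * expectation (\<lambda>x. S x ^ 2)) + expectation (\<lambda>x. S x ^ 4)"
proof -
  have [measurable]: "Y \<in> borel_measurable M" "S \<in> borel_measurable M"
    using indep_var_rv1[OF indep] indep_var_rv2[OF indep] by auto
  have "even (2::nat)" "even (4::nat)" by simp_all
  have "integrable M (\<lambda>x. Y x ^ 2)" "integrable M (\<lambda>x. S x ^ 2)"
    using integrable_power_le[OF _ Y4, of 2] integrable_power_le[OF _ S4, of 2] by auto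
  then show "expectation (\<lambda>x. (Y x + S x) ^ 2) = expectation (\<lambda>x. Y x ^ 2) + expectation (\<lambda>x. S x ^ 2)"
    using indep_var_power_add(2)[OF indep, where n=2, OF _ _ \<open>even 2\<close>] Y0 S0
    by (simp add: numeral_2_eq_2 atMost_Suc prob_space)
  show "expectation (\<lambda>x. (Y x + S x) ^ 4) = expectation (\<lambda>x. Y x ^ 4)
      + 6 * (expectation (\<lambda>x. Y x ^ 2) * expectation (\<lambda>x. S x ^ 2)) + expectation (\<lambda>x. S x ^ 4)"
    using indep_var_power_add(2)[OF indep Y4 S4 \<open>even 4\<close>] Y0 S0
    by (simp add: eval_nat_numeral atMost_Suc binomial_Suc_Suc prob_space add.assoc)
qed

lemma (in prob_space) moments_sum_indep_centered:
  fixes Z :: "nat \<Rightarrow> 'a \<Rightarrow> real"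
  assumes indep: "indep_vars (\<lambda>_. borel) Z {1..}"
    and int4: "\<And>k. k \<ge> 1 \<Longrightarrow> integrable M (\<lambda>x. Z k x ^ 4)"
    and mean0: "\<And>k. k \<ge> 1 \<Longrightarrow> expectation (Z k) = 0"
    and mom2: "\<And>k. k \<ge> 1 \<Longrightarrow> expectation (\<lambda>x. Z k x ^ 2) \<le> B"
    and mom4: "\<And>k. k \<ge> 1 \<Longrightarrow> expectation (\<lambda>x. Z k x ^ 4) \<le> B"
  shows "integrable M (\<lambda>x. (\<Sum>k\<in>{1..n}. Z k x) ^ 4)
    \<and> expectation (\<lambda>x. (\<Sum>k\<in>{1..n}. Z k x) ^ 2) \<le> real n * B
    \<and> expectation (\<lambda>x. (\<Sum>k\<in>{1..n}. Z k x) ^ 4) \<le> real n * B + 3 * (real n * B)\<^sup>2"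
proof (induction n)
  case 0
  then show ?case by simp
next
  case (Suc n)
  have [measurable]: "k \<ge> 1 \<Longrightarrow> Z k \<in> borel_measurable M" for k
    using indep by (auto simp: indep_vars_def)
  define S where "S x = (\<Sum>k\<in>{1..n}. Z k x)" for x
  define Y where "Y = Z (Suc n)"
  have S4: "integrable M (\<lambda>x. S x ^ 4)" and S2: "expectation (\<lambda>x. S x ^ 2) \<le> real n * B"
    and S4_le: "expectation (\<lambda>x. S x ^ 4) \<le> real n * B + 3 * (real n * B)\<^sup>2"
    using Suc.IH unfolding S_def by auto
  have Y4: "integrable M (\<lambda>x. Y x ^ 4)" and Y2: "expectation (\<lambda>x. Y x ^ 2) \<le> B"
    and Y4_le: "expectation (\<lambda>x. Y x ^ 4) \<le> B" and Y0: "expectation Y = 0"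
    unfolding Y_def using int4 mom2 mom4 mean0 by auto
  have indep_YS: "indep_var borel Y borel S"
    unfolding Y_def S_def by (rule indep_vars_sum) (auto intro: indep_vars_subset[OF indep])
  have "integrable M (Z k)" if "k \<ge> 1" for k
    using integrable_power_le[OF _ int4[OF that], of 1] that by simp
  then have S0: "expectation S = 0"
    unfolding S_def using mean0 by (simp add: Bochner_Integration.integral_sum)
  have "0 \<le> expectation (\<lambda>x. Y x ^ 2)" by (rule integral_nonneg_AE) simp
  with Y2 have "0 \<le> B" by linarith
  have "0 \<le> expectation (\<lambda>x. S x ^ 2)" by (rule integral_nonneg_AE) simp
  note moments = indep_centered_moments_add[OF indep_YS Y4 S4 Y0 S0]
  have "6 * (expectation (\<lambda>x. Y x ^ 2) * expectation (\<lambda>x. S x ^ 2)) \<le> 6 * (B * (real n * B))"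
    using Y2 S2 \<open>0 \<le> B\<close> \<open>0 \<le> expectation (\<lambda>x. S x ^ 2)\<close> by (intro mult_left_mono mult_mono) auto
  then have "expectation (\<lambda>x. (Y x + S x) ^ 4) \<le> B + 6 * (B * (real n * B)) + (real n * B + 3 * (real n * B)\<^sup>2)"
    using moments(2) Y4_le S4_le by linarith
  also have "\<dots> \<le> real (Suc n) * B + 3 * (real (Suc n) * B)\<^sup>2"
    using zero_le_square[of B] by (simp add: power2_eq_square algebra_simps del: zero_le_square)
  finally have E4_le: "expectation (\<lambda>x. (Y x + S x) ^ 4) \<le> real (Suc n) * B + 3 * (real (Suc n) * B)\<^sup>2" .
  have E2_le: "expectation (\<lambda>x. (Y x + S x) ^ 2) \<le> real (Suc n) * B"
    using moments(1) Y2 S2 by (simp add: algebra_simps)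
  have "(\<Sum>k\<in>{1..Suc n}. Z k x) = Y x + S x" for x
    unfolding S_def Y_def by (simp add: add.commute)
  then show ?case
    using indep_var_power_add(1)[OF indep_YS Y4 S4] E2_le E4_le by simp
qed

lemma tendsto_zero_if_power_tendsto_zero:
  fixes y :: "nat \<Rightarrow> real"
  assumes "(\<lambda>n. y n ^ k) \<longlonglongrightarrow> 0" "0 < k"
  shows "y \<longlonglongrightarrow> 0"
proof -
  have "(\<lambda>n. root k (\<bar>y n\<bar> ^ k)) \<longlonglongrightarrow> root k 0"
    using assms by (intro tendsto_real_root) (simp_all add: tendsto_rabs_zero_iff power_abs[symmetric])
  then show ?thesis
    using assms(2) by (simp add: real_root_power_cancel tendsto_rabs_zero_iff)
qed

lemma (in prob_space) AE_tendsto_zero_if_summable_expectation: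
  fixes W :: "nat \<Rightarrow> 'a \<Rightarrow> real"
  assumes int: "\<And>n. integrable M (W n)" and nonneg: "\<And>n x. 0 \<le> W n x"
    and summable: "summable (\<lambda>n. expectation (W n))"
  shows "AE x in M. (\<lambda>n. W n x) \<longlonglongrightarrow> 0"
proof -
  have [measurable]: "W n \<in> borel_measurable M" for n using int by auto
  have "(\<integral>\<^sup>+x. (\<Sum>n. ennreal (W n x)) \<partial>M) = (\<Sum>n. \<integral>\<^sup>+x. ennreal (W n x) \<partial>M)"
    by (rule nn_integral_suminf) auto
  also have "\<dots> = (\<Sum>n. ennreal (expectation (W n)))"
    using int nonneg by (subst nn_integral_eq_integral) auto
  also have "\<dots> = ennreal (\<Sum>n. expectation (W n))"
    using summable nonneg by (intro suminf_ennreal2) (auto intro: integral_nonneg_AE)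
  finally have "(\<integral>\<^sup>+x. (\<Sum>n. ennreal (W n x)) \<partial>M) \<noteq> \<infinity>" by simp
  then have "AE x in M. (\<Sum>n. ennreal (W n x)) \<noteq> \<infinity>"
    by (intro nn_integral_PInf_AE) auto
  then show ?thesis
  proof (rule AE_mp, intro AE_I2 impI)
    fix x assume "(\<Sum>n. ennreal (W n x)) \<noteq> \<infinity>"
    then have "summable (\<lambda>n. W n x)"
      using nonneg by (intro summable_suminf_not_top) auto
    then show "(\<lambda>n. W n x) \<longlonglongrightarrow> 0" by (rule summable_LIMSEQ_zero)
  qed
qed

lemma (in prob_space) fourth_moment_average_le:
  fixes Z :: "nat \<Rightarrow> 'a \<Rightarrow> real"
  assumes indep: "indep_vars (\<lambda>_. borel) Z {1..}"
    and int4: "\<And>k. k \<ge> 1 \<Longrightarrow> integrable M (\<lambda>x. Z k x ^ 4)"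
    and mean0: "\<And>k. k \<ge> 1 \<Longrightarrow> expectation (Z k) = 0"
    and mom2: "\<And>k. k \<ge> 1 \<Longrightarrow> expectation (\<lambda>x. Z k x ^ 2) \<le> B"
    and mom4: "\<And>k. k \<ge> 1 \<Longrightarrow> expectation (\<lambda>x. Z k x ^ 4) \<le> B"
  shows "integrable M (\<lambda>x. ((\<Sum>k\<in>{1..n}. Z k x) / real n) ^ 4)"
    and "expectation (\<lambda>x. ((\<Sum>k\<in>{1..n}. Z k x) / real n) ^ 4) \<le> (B + 3 * B\<^sup>2) * inverse ((real n)\<^sup>2)"
proof -
  note moments = moments_sum_indep_centered[OF indep int4 mean0 mom2 mom4, of n]
  show "integrable M (\<lambda>x. ((\<Sum>k\<in>{1..n}. Z k x) / real n) ^ 4)"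
    using moments by (simp add: power_divide)
  show "expectation (\<lambda>x. ((\<Sum>k\<in>{1..n}. Z k x) / real n) ^ 4) \<le> (B + 3 * B\<^sup>2) * inverse ((real n)\<^sup>2)"
  proof (cases "n = 0")
    case False
    have "0 \<le> expectation (\<lambda>x. Z 1 x ^ 2)" by (rule integral_nonneg_AE) simp
    moreover have "expectation (\<lambda>x. Z 1 x ^ 2) \<le> B" by (rule mom2) simp
    ultimately have "0 \<le> B" by linarith
    with False have "B / real n \<le> B" by (simp add: divide_le_eq mult_le_cancel_left1)
    have "expectation (\<lambda>x. ((\<Sum>k\<in>{1..n}. Z k x) / real n) ^ 4)
        = expectation (\<lambda>x. (\<Sum>k\<in>{1..n}. Z k x) ^ 4) / real n ^ 4"
      by (simp add: power_divide)
    also have "\<dots> \<le> (real n * B + 3 * (real n * B)\<^sup>2) / real n ^ 4"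
      using moments by (intro divide_right_mono) auto
    also have "\<dots> = (B / real n + 3 * B\<^sup>2) * inverse ((real n)\<^sup>2)"
      using False by (simp add: field_simps power2_eq_square power4_eq_xxxx)
    also have "\<dots> \<le> (B + 3 * B\<^sup>2) * inverse ((real n)\<^sup>2)"
      using \<open>B / real n \<le> B\<close> by (intro mult_right_mono add_right_mono) auto
    finally show ?thesis .
  qed simp
qed

theorem (in prob_space) strong_law_fourth_moment:
  fixes Z :: "nat \<Rightarrow> 'a \<Rightarrow> real"
  assumes indep: "indep_vars (\<lambda>_. borel) Z {1..}"
    and int4: "\<And>k. k \<ge> 1 \<Longrightarrow> integrable M (\<lambda>x. Z k x ^ 4)"
    and mean0: "\<And>k. k \<ge> 1 \<Longrightarrow> expectation (Z k) = 0"
    and mom2: "\<And>k. k \<ge> 1 \<Longrightarrow> expectation (\<lambda>x. Z k x ^ 2) \<le> B"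
    and mom4: "\<And>k. k \<ge> 1 \<Longrightarrow> expectation (\<lambda>x. Z k x ^ 4) \<le> B"
  shows "AE x in M. (\<lambda>n. (\<Sum>k\<in>{1..n}. Z k x) / real n) \<longlonglongrightarrow> 0"
proof -
  define W where "W n x = ((\<Sum>k\<in>{1..n}. Z k x) / real n) ^ 4" for n x
  note bound = fourth_moment_average_le[OF indep int4 mean0 mom2 mom4]
  have nonneg: "0 \<le> W n x" for n x
    unfolding W_def by (simp add: zero_le_even_power)
  have "summable (\<lambda>n. expectation (W n))"
  proof (rule summable_comparison_test')
    show "summable (\<lambda>n. (B + 3 * B\<^sup>2) * inverse ((real n)\<^sup>2))"
      by (rule summable_mult, rule inverse_power_summable) simp
    fix n
    have "0 \<le> expectation (W n)" by (rule integral_nonneg_AE) (simp add: nonneg)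
    then show "norm (expectation (W n)) \<le> (B + 3 * B\<^sup>2) * inverse ((real n)\<^sup>2)"
      using bound(2)[of n] unfolding W_def by simp
  qed
  with bound(1) nonneg have "AE x in M. (\<lambda>n. W n x) \<longlonglongrightarrow> 0"
    unfolding W_def by (intro AE_tendsto_zero_if_summable_expectation)
  then show ?thesis
  proof (rule AE_mp, intro AE_I2 impI)
    fix x assume "(\<lambda>n. W n x) \<longlonglongrightarrow> 0"
    then show "(\<lambda>n. (\<Sum>k\<in>{1..n}. Z k x) / real n) \<longlonglongrightarrow> 0"
      unfolding W_def by (rule tendsto_zero_if_power_tendsto_zero) simp
  qed
qed

section \<open>Exponentially bounded functions\<close>

definition exp_bounded :: "('a::real_normed_vector \<Rightarrow> real) \<Rightarrow> bool" where
  "exp_bounded g \<longleftrightarrow> (\<exists>C r. \<forall>x. \<bar>g x\<bar> \<le> C * exp (r * norm x))"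

lemma exp_boundedE:
  assumes "exp_bounded g"
  obtains C r where "0 \<le> C" "0 \<le> r" "\<And>x. \<bar>g x\<bar> \<le> C * exp (r * norm x)"
proof -
  obtain C r where bound: "\<And>x. \<bar>g x\<bar> \<le> C * exp (r * norm x)"
    using assms unfolding exp_bounded_def by blast
  have "\<bar>g 0\<bar> \<le> C" using bound[of 0] by simp
  then have "0 \<le> C" by (meson abs_ge_zero order_trans)
  have "\<bar>g x\<bar> \<le> C * exp (\<bar>r\<bar> * norm x)" for x
  proof -
    have "exp (r * norm x) \<le> exp (\<bar>r\<bar> * norm x)" by (simp add: mult_right_mono)
    then show ?thesis using bound[of x] \<open>0 \<le> C\<close> mult_left_mono order_trans by blast
  qed
  then show thesis using \<open>0 \<le> C\<close> by (intro that[of C "\<bar>r\<bar>"]) auto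
qed

lemma exp_bounded_le: "exp_bounded g \<Longrightarrow> (\<And>x. \<bar>f x\<bar> \<le> \<bar>g x\<bar>) \<Longrightarrow> exp_bounded f"
  unfolding exp_bounded_def by (meson order_trans)

lemma exp_bounded_const: "exp_bounded (\<lambda>x. c)"
  unfolding exp_bounded_def by (rule exI[of _ "\<bar>c\<bar>"], rule exI[of _ 0]) simp

lemma exp_bounded_abs: "exp_bounded f \<Longrightarrow> exp_bounded (\<lambda>x. \<bar>f x\<bar>)"
  unfolding exp_bounded_def by simp

lemma exp_bounded_mult:
  assumes "exp_bounded f" "exp_bounded g"
  shows "exp_bounded (\<lambda>x. f x * g x)"
proof -
  obtain C1 r1 where "0 \<le> C1" "0 \<le> r1" and 1: "\<And>x. \<bar>f x\<bar> \<le> C1 * exp (r1 * norm x)"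
    using assms(1) by (rule exp_boundedE) blast
  obtain C2 r2 where "0 \<le> C2" "0 \<le> r2" and 2: "\<And>x. \<bar>g x\<bar> \<le> C2 * exp (r2 * norm x)"
    using assms(2) by (rule exp_boundedE) blast
  have "\<bar>f x * g x\<bar> \<le> C1 * C2 * exp ((r1 + r2) * norm x)" for x
  proof -
    have "\<bar>f x * g x\<bar> \<le> (C1 * exp (r1 * norm x)) * (C2 * exp (r2 * norm x))"
      unfolding abs_mult using 1 2 \<open>0 \<le> C1\<close> by (intro mult_mono) auto
    moreover have "exp ((r1 + r2) * norm x) = exp (r1 * norm x) * exp (r2 * norm x)"
      by (simp add: distrib_right exp_add)
    ultimately show ?thesis by (simp add: mult_ac)
  qed
  then show ?thesis unfolding exp_bounded_def by blast
qed

lemma exp_bounded_add: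
  assumes "exp_bounded f" "exp_bounded g"
  shows "exp_bounded (\<lambda>x. f x + g x)"
proof -
  obtain C1 r1 where "0 \<le> C1" "0 \<le> r1" and 1: "\<And>x. \<bar>f x\<bar> \<le> C1 * exp (r1 * norm x)"
    using assms(1) by (rule exp_boundedE) blast
  obtain C2 r2 where "0 \<le> C2" "0 \<le> r2" and 2: "\<And>x. \<bar>g x\<bar> \<le> C2 * exp (r2 * norm x)"
    using assms(2) by (rule exp_boundedE) blast
  have "\<bar>f x + g x\<bar> \<le> (C1 + C2) * exp ((r1 + r2) * norm x)" for x
  proof -
    have "C1 * exp (r1 * norm x) \<le> C1 * exp ((r1 + r2) * norm x)"
      using \<open>0 \<le> C1\<close> \<open>0 \<le> r2\<close> by (intro mult_left_mono) (auto simp: distrib_right)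
    moreover have "C2 * exp (r2 * norm x) \<le> C2 * exp ((r1 + r2) * norm x)"
      using \<open>0 \<le> C2\<close> \<open>0 \<le> r1\<close> by (intro mult_left_mono) (auto simp: distrib_right)
    ultimately show ?thesis
      using 1[of x] 2[of x] abs_triangle_ineq[of "f x" "g x"] by (simp add: distrib_right)
  qed
  then show ?thesis unfolding exp_bounded_def by blast
qed

lemma exp_bounded_diff: "exp_bounded f \<Longrightarrow> exp_bounded g \<Longrightarrow> exp_bounded (\<lambda>x. f x - g x)"
  using exp_bounded_add[of f "\<lambda>x. - g x"] unfolding exp_bounded_def by simp

lemma exp_bounded_power: "exp_bounded f \<Longrightarrow> exp_bounded (\<lambda>x. f x ^ n)"
  by (induction n) (auto intro: exp_bounded_mult exp_bounded_const)

lemma exp_bounded_exp_abs_inner: "exp_bounded (\<lambda>x. exp \<bar>x \<bullet> v\<bar>)"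
proof -
  have "\<bar>exp \<bar>x \<bullet> v\<bar>\<bar> \<le> 1 * exp (norm v * norm x)" for x
    using Cauchy_Schwarz_ineq2[of x v] by (simp add: mult.commute)
  then show ?thesis unfolding exp_bounded_def by blast
qed

lemma exp_bounded_exp_inner: "exp_bounded (\<lambda>x. exp (x \<bullet> v))"
  by (rule exp_bounded_le[OF exp_bounded_exp_abs_inner[of v]]) simp

lemma exp_bounded_inner: "exp_bounded (\<lambda>x. x \<bullet> v)"
proof (rule exp_bounded_le[OF exp_bounded_exp_abs_inner[of v]])
  fix x
  have "\<bar>x \<bullet> v\<bar> \<le> exp \<bar>x \<bullet> v\<bar>" using exp_ge_add_one_self[of "\<bar>x \<bullet> v\<bar>"] by linarith
  then show "\<bar>x \<bullet> v\<bar> \<le> \<bar>exp \<bar>x \<bullet> v\<bar>\<bar>" by simp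
qed

lemmas exp_bounded_intros =
  exp_bounded_const exp_bounded_abs exp_bounded_mult exp_bounded_add exp_bounded_diff
  exp_bounded_power exp_bounded_exp_abs_inner exp_bounded_exp_inner exp_bounded_inner

text \<open>Every exponentially bounded function is dominated by a finite sum of exponentials of linear
  forms, whose Gaussian integrals are known; this is where the sign vectors come from.\<close>
lemma exp_norm_le_sum_exp_inner:
  fixes x :: "real^'d"
  assumes "0 \<le> r"
  shows "exp (r * norm x) \<le> (\<Sum>s\<in>UNIV. exp (x \<bullet> (r *\<^sub>R (\<chi> i. if s i then 1 else -1))))"
proof -
  define s where "s i = (0 \<le> x $ i)" for i
  have "norm x \<le> (\<Sum>i\<in>UNIV. \<bar>x $ i\<bar>)" by (rule norm_le_l1_cart)
  also have "\<dots> = x \<bullet> (\<chi> i. if s i then 1 else -1)"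
    unfolding inner_vec_def s_def by (intro sum.cong) auto
  finally have "exp (r * norm x) \<le> exp (x \<bullet> (r *\<^sub>R (\<chi> i. if s i then 1 else -1)))"
    using assms by (simp add: mult_left_mono)
  also have "\<dots> \<le> (\<Sum>s\<in>UNIV. exp (x \<bullet> (r *\<^sub>R (\<chi> i. if s i then 1 else -1))))"
    by (rule member_le_sum) auto
  finally show ?thesis .
qed

section \<open>Gaussian integrals and exponential tilting\<close>

lemma integral_lborel_translate:
  fixes f :: "'a::euclidean_space \<Rightarrow> real"
  assumes [measurable]: "f \<in> borel_measurable borel"
  shows "(\<integral>x. f x \<partial>lborel) = (\<integral>y. f (a + y) \<partial>lborel)"
  by (subst lborel_distr_plus[of a, symmetric]) (simp add: integral_distr)

lemma nn_integral_lborel_translate: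
  fixes f :: "'a::euclidean_space \<Rightarrow> ennreal"
  assumes [measurable]: "f \<in> borel_measurable borel"
  shows "(\<integral>\<^sup>+x. f x \<partial>lborel) = (\<integral>\<^sup>+y. f (a + y) \<partial>lborel)"
  by (subst lborel_distr_plus[of a, symmetric]) (simp add: nn_integral_distr)

lemma integral_lborel_uminus:
  fixes f :: "'a::euclidean_space \<Rightarrow> real"
  assumes [measurable]: "f \<in> borel_measurable borel"
  shows "(\<integral>x. f x \<partial>lborel) = (\<integral>y. f (- y) \<partial>lborel)"
proof -
  have "(lborel :: 'a measure) = density (distr lborel borel (\<lambda>x. 0 + (-1) *\<^sub>R x)) (\<lambda>_. \<bar>-1::real\<bar> ^ DIM('a))"
    by (rule lborel_affine) simp
  then have "(\<integral>x. f x \<partial>lborel) = (\<integral>x. f x \<partial>distr lborel borel uminus)" by (simp add: density_1)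
  also have "\<dots> = (\<integral>y. f (- y) \<partial>lborel)" by (subst integral_distr) auto
  finally show ?thesis .
qed

lemma matrix_vector_mult_measurable [measurable]:
  "(\<lambda>x. (A::real^'n^'m) *v x) \<in> borel_measurable borel"
  by (intro borel_measurable_continuous_onI matrix_vector_mult_linear_continuous_on)

lemma tendsto_exp_diff_quotient:
  fixes t :: "'a \<Rightarrow> real" and y :: real
  assumes "filterlim t (at 0) F"
  shows "((\<lambda>n. (exp (t n * y) - 1) / t n) \<longlongrightarrow> y) F"
proof -
  have "((\<lambda>s. exp (s * y)) has_field_derivative y) (at 0)"
    by (auto intro!: derivative_eq_intros)
  then have "((\<lambda>s. (exp (s * y) - exp (0 * y)) / (s - 0)) \<longlongrightarrow> y) (at 0)"
    by (simp only: has_field_derivative_iff)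
  then show ?thesis using filterlim_compose[OF _ assms] by simp
qed

lemma abs_exp_minus_one_le:
  fixes a :: real
  shows "\<bar>exp a - 1\<bar> \<le> \<bar>a\<bar> * exp \<bar>a\<bar>"
proof (cases "0 \<le> a")
  case True
  have "exp a - 1 \<le> a * exp a"
    using exp_ge_add_one_self[of "-a"] by (simp add: exp_minus field_simps)
  then show ?thesis using True by simp
next
  case False
  have "1 - exp a \<le> -a" using exp_ge_add_one_self[of a] by linarith
  also have "\<dots> \<le> -a * exp (-a)" using False mult_left_mono[of 1 "exp (-a)" "-a"] by simp
  finally show ?thesis using False by simp
qed

lemma abs_exp_diff_quotient_le:
  fixes t y :: real
  assumes "0 < t" "t \<le> 1"
  shows "\<bar>(exp (t * y) - 1) / t\<bar> \<le> \<bar>y\<bar> * exp \<bar>y\<bar>"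
proof -
  have "\<bar>exp (t * y) - 1\<bar> \<le> t * \<bar>y\<bar> * exp (t * \<bar>y\<bar>)"
    using abs_exp_minus_one_le[of "t * y"] assms by (simp add: abs_mult)
  also have "\<dots> \<le> t * \<bar>y\<bar> * exp \<bar>y\<bar>"
    using assms by (intro mult_left_mono) (auto simp: mult_left_le_one_le)
  finally show ?thesis using assms by (simp add: divide_le_eq mult_ac)
qed

lemma abs_exp_diff_le:
  fixes s t :: real
  shows "\<bar>exp s - exp t\<bar> \<le> \<bar>s - t\<bar> * exp (max \<bar>s\<bar> \<bar>t\<bar>)"
proof -
  have *: "\<bar>exp s - exp t\<bar> \<le> \<bar>s - t\<bar> * exp (max \<bar>s\<bar> \<bar>t\<bar>)" if "t \<le> s" for s t :: real
  proof -
    have "\<bar>exp s - exp t\<bar> = exp t * \<bar>exp (s - t) - 1\<bar>"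
      by (simp add: exp_diff abs_mult field_simps)
    also have "\<dots> \<le> exp t * (\<bar>s - t\<bar> * exp \<bar>s - t\<bar>)"
      by (intro mult_left_mono abs_exp_minus_one_le) simp
    also have "\<dots> = \<bar>s - t\<bar> * exp s" using that by (simp add: exp_diff)
    also have "\<dots> \<le> \<bar>s - t\<bar> * exp (max \<bar>s\<bar> \<bar>t\<bar>)" by (intro mult_left_mono) auto
    finally show ?thesis .
  qed
  show ?thesis
    using *[of t s] *[of s t] by (cases "t \<le> s") (auto simp: abs_minus_commute max.commute)
qed

lemma inner_symmetric_matrix:
  fixes A :: "real^'n^'n"
  shows "transpose A = A \<Longrightarrow> x \<bullet> (A *v y) = (A *v x) \<bullet> y"
  by (metis dot_lmul_matrix transpose_matrix_vector)

text \<open>The normalisation of the density is an assumption rather than a computation: in the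
  application it follows from the hypothesis that the samples have this density.\<close>
locale centered_gaussian =
  fixes S :: "real^'d^'d"
  assumes sym_pos: "sym_pos_def S"
    and density_normalized: "(\<integral>\<^sup>+x. ennreal (mvn_density S x) \<partial>lborel) = 1"
begin

abbreviation dens :: "real^'d \<Rightarrow> real" where "dens \<equiv> mvn_density S"

definition mgf :: "real^'d \<Rightarrow> real" where "mgf v = exp ((v \<bullet> (S *v v)) / 2)"

definition gauss_mean :: "real^'d \<Rightarrow> (real^'d \<Rightarrow> real) \<Rightarrow> real" where
  "gauss_mean m f = (\<integral>y. dens y * f (y + m) \<partial>lborel)"

lemma S_symmetric: "transpose S = S"
  using sym_pos unfolding sym_pos_def_def by simp

lemma inner_S_commute: "x \<bullet> (S *v y) = (S *v x) \<bullet> y"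
  by (rule inner_symmetric_matrix[OF S_symmetric])

lemma S_positive: "x \<noteq> 0 \<Longrightarrow> 0 < x \<bullet> (S *v x)"
  using sym_pos unfolding sym_pos_def_def by blast

lemma S_matrix_inv: "S ** matrix_inv S = mat 1" "matrix_inv S ** S = mat 1"
proof -
  have "inj ((*v) S)"
  proof (rule injI)
    fix x y assume "S *v x = S *v y"
    then have "(x - y) \<bullet> (S *v (x - y)) = 0" by (simp add: matrix_vector_mult_diff_distrib)
    then show "x = y" using S_positive[of "x - y"] by auto
  qed
  then have "invertible S"
    using invertible_left_inverse matrix_left_invertible_injective by blast
  then have "S ** matrix_inv S = mat 1 \<and> matrix_inv S ** S = mat 1"
    unfolding invertible_def matrix_inv_def by (rule someI_ex)
  then show "S ** matrix_inv S = mat 1" "matrix_inv S ** S = mat 1" by auto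
qed

lemma matrix_inv_S_symmetric: "transpose (matrix_inv S) = matrix_inv S"
proof -
  have "transpose (matrix_inv S) ** S = mat 1"
    using arg_cong[OF S_matrix_inv(1), of transpose] by (simp add: matrix_transpose_mul S_symmetric)
  then have "transpose (matrix_inv S) = transpose (matrix_inv S) ** (S ** matrix_inv S)"
    by (simp add: S_matrix_inv)
  also have "\<dots> = matrix_inv S"
    by (simp add: matrix_mul_assoc \<open>transpose (matrix_inv S) ** S = mat 1\<close>)
  finally show ?thesis .
qed

lemma quadratic_form_shift:
  "(x - S *v v) \<bullet> (matrix_inv S *v (x - S *v v))
     = x \<bullet> (matrix_inv S *v x) - 2 * (x \<bullet> v) + v \<bullet> (S *v v)"
proof -
  have inv: "matrix_inv S *v (S *v v) = v"
    by (simp add: matrix_vector_mul_assoc S_matrix_inv)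
  have "(S *v v) \<bullet> (matrix_inv S *v x) = v \<bullet> x"
    by (metis inv inner_symmetric_matrix[OF matrix_inv_S_symmetric] inner_commute)
  then show ?thesis
    by (simp add: matrix_vector_mult_diff_distrib inner_diff_left inner_diff_right inv inner_commute)
qed

lemma dens_measurable [measurable]: "dens \<in> borel_measurable borel"
  unfolding mvn_density_def by measurable

lemma dens_pos: "0 < dens x"
proof -
  have "0 < sqrt ((2 * pi) ^ CARD('d) * det S)"
  proof (rule ccontr)
    assume "\<not> ?thesis"
    then have "ennreal (dens x) = 0" for x
      unfolding mvn_density_def by (simp add: divide_nonneg_nonpos ennreal_neg)
    then show False using density_normalized by simp
  qed
  then show ?thesis unfolding mvn_density_def by simp
qed

lemma dens_nonneg: "0 \<le> dens x"
  using dens_pos[of x] by simp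

lemma dens_uminus: "dens (- x) = dens x"
  unfolding mvn_density_def by (simp add: vec.neg)

lemma dens_mult_exp_inner: "dens x * exp (x \<bullet> v) = mgf v * dens (x - S *v v)"
proof -
  have "- (x \<bullet> (matrix_inv S *v x)) / 2 + x \<bullet> v
      = v \<bullet> (S *v v) / 2 + - ((x - S *v v) \<bullet> (matrix_inv S *v (x - S *v v))) / 2"
    unfolding quadratic_form_shift by (simp add: field_simps)
  then have "exp (- (x \<bullet> (matrix_inv S *v x)) / 2) * exp (x \<bullet> v)
      = exp (v \<bullet> (S *v v) / 2) * exp (- ((x - S *v v) \<bullet> (matrix_inv S *v (x - S *v v))) / 2)"
    by (simp add: exp_add[symmetric])
  then show ?thesis unfolding mvn_density_def mgf_def by (simp add: field_simps)
qed

lemma integrable_dens: "integrable lborel dens"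
  using density_normalized by (intro integrableI_nonneg) (auto simp: dens_nonneg)

lemma integral_dens: "(\<integral>x. dens x \<partial>lborel) = 1"
proof -
  have "ennreal (\<integral>x. dens x \<partial>lborel) = 1"
    using density_normalized nn_integral_eq_integral[OF integrable_dens] dens_nonneg by simp
  then show ?thesis by simp
qed

lemma integrable_dens_exp_inner: "integrable lborel (\<lambda>x. dens x * exp (x \<bullet> v))"
proof (rule integrableI_nonneg)
  have "(\<integral>\<^sup>+x. ennreal (dens x * exp (x \<bullet> v)) \<partial>lborel)
      = (\<integral>\<^sup>+x. ennreal (mgf v) * ennreal (dens (x - S *v v)) \<partial>lborel)"
    by (intro nn_integral_cong) (simp add: dens_mult_exp_inner ennreal_mult mgf_def dens_nonneg)
  also have "\<dots> = ennreal (mgf v) * (\<integral>\<^sup>+y. ennreal (dens (S *v v + y - S *v v)) \<partial>lborel)"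
    by (subst nn_integral_cmult, measurable, subst nn_integral_lborel_translate[where a="S *v v"]) auto
  finally show "(\<integral>\<^sup>+x. ennreal (dens x * exp (x \<bullet> v)) \<partial>lborel) < \<infinity>"
    using density_normalized by simp
qed (auto simp: dens_nonneg)

lemma integrable_dens_mult:
  assumes "exp_bounded g" and [measurable]: "g \<in> borel_measurable borel"
  shows "integrable lborel (\<lambda>x. dens x * g x)"
proof -
  obtain C r where "0 \<le> C" "0 \<le> r" and bound: "\<And>x. \<bar>g x\<bar> \<le> C * exp (r * norm x)"
    using assms(1) by (rule exp_boundedE) blast
  define w where "w s = r *\<^sub>R (\<chi> i. if s i then 1 else - (1::real))" for s :: "'d \<Rightarrow> bool"
  show ?thesis
  proof (rule Bochner_Integration.integrable_bound)
    show "integrable lborel (\<lambda>x. C * (\<Sum>s\<in>UNIV. dens x * exp (x \<bullet> w s)))"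
      by (intro integrable_mult_right Bochner_Integration.integrable_sum integrable_dens_exp_inner)
    show "AE x in lborel. norm (dens x * g x) \<le> norm (C * (\<Sum>s\<in>UNIV. dens x * exp (x \<bullet> w s)))"
    proof (rule AE_I2)
      fix x :: "real^'d"
      have "norm (dens x * g x) \<le> dens x * (C * exp (r * norm x))"
        using bound[of x] dens_nonneg[of x] by (simp add: abs_mult mult_left_mono)
      also have "\<dots> \<le> dens x * (C * (\<Sum>s\<in>UNIV. exp (x \<bullet> w s)))"
        unfolding w_def using exp_norm_le_sum_exp_inner[OF \<open>0 \<le> r\<close>, of x] \<open>0 \<le> C\<close> dens_nonneg[of x]
        by (intro mult_left_mono) auto
      also have "\<dots> \<le> norm (C * (\<Sum>s\<in>UNIV. dens x * exp (x \<bullet> w s)))"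
        by (simp add: sum_distrib_left mult_ac)
      finally show "norm (dens x * g x) \<le> norm (C * (\<Sum>s\<in>UNIV. dens x * exp (x \<bullet> w s)))" .
    qed
  qed measurable
qed

lemma integral_dens_exp_inner_mult:
  assumes [measurable]: "g \<in> borel_measurable borel"
  shows "(\<integral>x. dens x * (exp (x \<bullet> v) * g x) \<partial>lborel) = mgf v * gauss_mean (S *v v) g"
proof -
  have "(\<integral>x. dens x * (exp (x \<bullet> v) * g x) \<partial>lborel) = (\<integral>x. mgf v * (dens (x - S *v v) * g x) \<partial>lborel)"
    by (intro Bochner_Integration.integral_cong) (simp_all add: mult.assoc[symmetric] dens_mult_exp_inner)
  also have "\<dots> = mgf v * (\<integral>y. dens (S *v v + y - S *v v) * g (S *v v + y) \<partial>lborel)"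
    by (subst integral_lborel_translate[where a="S *v v"]) auto
  finally show ?thesis unfolding gauss_mean_def by (simp add: add.commute)
qed

lemma integral_dens_inner: "(\<integral>x. dens x * (x \<bullet> a) \<partial>lborel) = 0"
proof -
  have "(\<integral>x. dens x * (x \<bullet> a) \<partial>lborel) = (\<integral>y. dens (- y) * ((- y) \<bullet> a) \<partial>lborel)"
    by (rule integral_lborel_uminus) measurable
  also have "\<dots> = - (\<integral>y. dens y * (y \<bullet> a) \<partial>lborel)" by (simp add: dens_uminus)
  finally show ?thesis by simp
qed

lemma integral_dens_inner3: "(\<integral>x. dens x * ((x \<bullet> a) * (x \<bullet> b) * (x \<bullet> c)) \<partial>lborel) = 0"
proof -
  have "(\<integral>x. dens x * ((x \<bullet> a) * (x \<bullet> b) * (x \<bullet> c)) \<partial>lborel) =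
        (\<integral>y. dens (- y) * (((- y) \<bullet> a) * ((- y) \<bullet> b) * ((- y) \<bullet> c)) \<partial>lborel)"
    by (rule integral_lborel_uminus) measurable
  also have "\<dots> = - (\<integral>y. dens y * ((y \<bullet> a) * (y \<bullet> b) * (y \<bullet> c)) \<partial>lborel)" by (simp add: dens_uminus)
  finally show ?thesis by simp
qed

lemma integrable_dens_inner_prod:
  "integrable lborel (\<lambda>x. dens x * (x \<bullet> a))"
  "integrable lborel (\<lambda>x. dens x * ((x \<bullet> a) * (x \<bullet> b)))"
  "integrable lborel (\<lambda>x. dens x * ((x \<bullet> a) * (x \<bullet> b) * (x \<bullet> c)))"
  by (intro integrable_dens_mult exp_bounded_intros; measurable)+

lemma gauss_mean_const: "gauss_mean m (\<lambda>y. 1) = 1"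
  unfolding gauss_mean_def by (simp add: integral_dens)

lemma gauss_mean_inner: "gauss_mean m (\<lambda>y. y \<bullet> a) = m \<bullet> a"
proof -
  have "gauss_mean m (\<lambda>y. y \<bullet> a) = (\<integral>y. dens y * (y \<bullet> a) + (m \<bullet> a) * dens y \<partial>lborel)"
    unfolding gauss_mean_def by (simp add: inner_add_left algebra_simps)
  then show ?thesis
    using integrable_dens_inner_prod(1) integrable_dens by (simp add: integral_dens_inner integral_dens)
qed

lemma integral_dens_inner_exp_diff_quotient:
  assumes "t \<noteq> 0"
  shows "(\<integral>x. dens x * ((x \<bullet> a) * ((exp (t * (x \<bullet> b)) - 1) / t)) \<partial>lborel) = mgf (t *\<^sub>R b) * ((S *v b) \<bullet> a)"
proof -
  have "integrable lborel (\<lambda>x. dens x * (exp (x \<bullet> (t *\<^sub>R b)) * (x \<bullet> a)))"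
    by (intro integrable_dens_mult exp_bounded_intros) measurable
  moreover have "(\<integral>x. dens x * (exp (x \<bullet> (t *\<^sub>R b)) * (x \<bullet> a)) \<partial>lborel) = mgf (t *\<^sub>R b) * (t * ((S *v b) \<bullet> a))"
    using integral_dens_exp_inner_mult[of "\<lambda>x. x \<bullet> a" "t *\<^sub>R b"]
    by (simp add: gauss_mean_inner matrix_vector_mult_scaleR)
  moreover have "dens x * ((x \<bullet> a) * ((exp (t * (x \<bullet> b)) - 1) / t))
      = (dens x * (exp (x \<bullet> (t *\<^sub>R b)) * (x \<bullet> a)) - dens x * (x \<bullet> a)) / t" for x
    by (simp add: field_simps)
  ultimately show ?thesis
    using integrable_dens_inner_prod(1) assms by (simp add: integral_dens_inner)
qed

text \<open>The second moment is the derivative at \<open>t = 0\<close> of the first moment of the tilted density,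
  obtained by dominated convergence along \<open>t = 1 / (n + 1)\<close>.\<close>
lemma integral_dens_inner2: "(\<integral>x. dens x * ((x \<bullet> a) * (x \<bullet> b)) \<partial>lborel) = a \<bullet> (S *v b)"
proof -
  define t where "t n = 1 / real (Suc n)" for n
  define G where "G n x = dens x * ((x \<bullet> a) * ((exp (t n * (x \<bullet> b)) - 1) / t n))" for n x
  have t_pos: "0 < t n" and t_le: "t n \<le> 1" for n unfolding t_def by auto
  have t_lim: "filterlim t (at 0) sequentially"
    unfolding filterlim_at t_def using LIMSEQ_Suc[OF lim_const_over_n[of 1]] by (auto simp del: of_nat_Suc)
  have "(\<lambda>n. mgf (t n *\<^sub>R b)) \<longlonglongrightarrow> 1"
  proof -
    have "(\<lambda>n. exp ((t n)\<^sup>2 * (b \<bullet> (S *v b)) / 2)) \<longlonglongrightarrow> exp (0\<^sup>2 * (b \<bullet> (S *v b)) / 2)"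
      using t_lim unfolding filterlim_at by (intro tendsto_intros) auto
    then show ?thesis by (simp add: mgf_def matrix_vector_mult_scaleR power2_eq_square mult.assoc)
  qed
  then have lim_formula: "(\<lambda>n. \<integral>x. G n x \<partial>lborel) \<longlonglongrightarrow> (S *v b) \<bullet> a"
    unfolding G_def integral_dens_inner_exp_diff_quotient[OF t_pos[THEN less_imp_neq, symmetric]]
    by (auto intro: tendsto_eq_intros)
  have lim_integral: "(\<lambda>n. \<integral>x. G n x \<partial>lborel) \<longlonglongrightarrow> (\<integral>x. dens x * ((x \<bullet> a) * (x \<bullet> b)) \<partial>lborel)"
  proof (rule integral_dominated_convergence[where w="\<lambda>x. dens x * (\<bar>x \<bullet> a\<bar> * (\<bar>x \<bullet> b\<bar> * exp \<bar>x \<bullet> b\<bar>))"])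
    show "integrable lborel (\<lambda>x. dens x * (\<bar>x \<bullet> a\<bar> * (\<bar>x \<bullet> b\<bar> * exp \<bar>x \<bullet> b\<bar>)))"
      by (intro integrable_dens_mult exp_bounded_intros) measurable
    show "AE x in lborel. (\<lambda>n. G n x) \<longlonglongrightarrow> dens x * ((x \<bullet> a) * (x \<bullet> b))"
      unfolding G_def by (intro AE_I2 tendsto_intros tendsto_exp_diff_quotient t_lim)
    show "AE x in lborel. norm (G n x) \<le> dens x * (\<bar>x \<bullet> a\<bar> * (\<bar>x \<bullet> b\<bar> * exp \<bar>x \<bullet> b\<bar>))" for n
    proof (rule AE_I2)
      fix x
      have "\<bar>x \<bullet> a\<bar> * \<bar>(exp (t n * (x \<bullet> b)) - 1) / t n\<bar> \<le> \<bar>x \<bullet> a\<bar> * (\<bar>x \<bullet> b\<bar> * exp \<bar>x \<bullet> b\<bar>)"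
        by (rule mult_left_mono[OF abs_exp_diff_quotient_le[OF t_pos t_le]]) simp
      then show "norm (G n x) \<le> dens x * (\<bar>x \<bullet> a\<bar> * (\<bar>x \<bullet> b\<bar> * exp \<bar>x \<bullet> b\<bar>))"
        unfolding G_def real_norm_def abs_mult abs_of_nonneg[OF dens_nonneg]
        by (rule mult_left_mono) (rule dens_nonneg)
    qed
  qed (unfold G_def, measurable)
  from LIMSEQ_unique[OF lim_integral lim_formula] show ?thesis
    by (simp add: inner_commute)
qed

lemma gauss_mean_inner2: "gauss_mean m (\<lambda>y. (y \<bullet> a) * (y \<bullet> b)) = (m \<bullet> a) * (m \<bullet> b) + a \<bullet> (S *v b)"
proof -
  have "gauss_mean m (\<lambda>y. (y \<bullet> a) * (y \<bullet> b)) = (\<integral>y. dens y * ((y \<bullet> a) * (y \<bullet> b))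
      + ((m \<bullet> b) * (dens y * (y \<bullet> a)) + ((m \<bullet> a) * (dens y * (y \<bullet> b)) + (m \<bullet> a) * (m \<bullet> b) * dens y)) \<partial>lborel)"
    unfolding gauss_mean_def by (simp add: inner_add_left algebra_simps)
  then show ?thesis
    using integrable_dens_inner_prod(1,2) integrable_dens
    by (simp add: integral_dens_inner integral_dens_inner2 integral_dens)
qed

lemma gauss_mean_inner3:
  "gauss_mean m (\<lambda>y. (y \<bullet> a) * (y \<bullet> b) * (y \<bullet> c)) = (m \<bullet> a) * (m \<bullet> b) * (m \<bullet> c)
     + (m \<bullet> a) * (b \<bullet> (S *v c)) + (m \<bullet> b) * (a \<bullet> (S *v c)) + (m \<bullet> c) * (a \<bullet> (S *v b))"
proof -
  let ?\<alpha> = "m \<bullet> a" and ?\<beta> = "m \<bullet> b" and ?\<gamma> = "m \<bullet> c"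
  have "gauss_mean m (\<lambda>y. (y \<bullet> a) * (y \<bullet> b) * (y \<bullet> c)) = (\<integral>y. dens y * ((y \<bullet> a) * (y \<bullet> b) * (y \<bullet> c))
      + (?\<gamma> * (dens y * ((y \<bullet> a) * (y \<bullet> b))) + (?\<beta> * (dens y * ((y \<bullet> a) * (y \<bullet> c)))
      + (?\<alpha> * (dens y * ((y \<bullet> b) * (y \<bullet> c))) + (?\<beta> * ?\<gamma> * (dens y * (y \<bullet> a))
      + (?\<alpha> * ?\<gamma> * (dens y * (y \<bullet> b)) + (?\<alpha> * ?\<beta> * (dens y * (y \<bullet> c)) + ?\<alpha> * ?\<beta> * ?\<gamma> * dens y))))))
      \<partial>lborel)"
    unfolding gauss_mean_def by (simp add: inner_add_left algebra_simps)
  also have "\<dots> = 0 + (?\<gamma> * (a \<bullet> (S *v b)) + (?\<beta> * (a \<bullet> (S *v c)) + (?\<alpha> * (b \<bullet> (S *v c))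
      + (?\<beta> * ?\<gamma> * 0 + (?\<alpha> * ?\<gamma> * 0 + (?\<alpha> * ?\<beta> * 0 + ?\<alpha> * ?\<beta> * ?\<gamma> * 1))))))"
    using integrable_dens_inner_prod(1)[of a] integrable_dens_inner_prod(1)[of b]
      integrable_dens_inner_prod(1)[of c] integrable_dens_inner_prod(2)[of a b]
      integrable_dens_inner_prod(2)[of a c] integrable_dens_inner_prod(2)[of b c]
      integrable_dens_inner_prod(3)[of a b c] integrable_dens
    by (simp add: integral_dens_inner integral_dens_inner2 integral_dens_inner3 integral_dens)
  finally show ?thesis by (simp add: algebra_simps)
qed

end

section \<open>Tilted empirical averages\<close>

lemma tendsto_of_tendsto_rationals:
  fixes A :: "nat \<Rightarrow> real \<Rightarrow> real" and F :: "real \<Rightarrow> real"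
  assumes rat: "\<And>q. q \<in> \<rat> \<Longrightarrow> (\<lambda>L. A L q) \<longlonglongrightarrow> F q"
    and lipschitz_A: "\<And>L q. \<bar>q - c\<bar> \<le> 1 \<Longrightarrow> \<bar>A L q - A L c\<bar> \<le> B * \<bar>q - c\<bar>"
    and lipschitz_F: "\<And>q. \<bar>q - c\<bar> \<le> 1 \<Longrightarrow> \<bar>F q - F c\<bar> \<le> B * \<bar>q - c\<bar>"
  shows "(\<lambda>L. A L c) \<longlonglongrightarrow> F c"
proof (rule LIMSEQ_I)
  fix \<epsilon> :: real assume "0 < \<epsilon>"
  define \<delta> where "\<delta> = min 1 (\<epsilon> / (3 * (\<bar>B\<bar> + 1)))"
  have "0 < \<delta>" using \<open>0 < \<epsilon>\<close> unfolding \<delta>_def by (simp add: add_pos_nonneg)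
  then obtain q where "q \<in> \<rat>" "c < q" "q < c + \<delta>"
    using Rats_dense_in_real[of c "c + \<delta>"] by auto
  then have q: "\<bar>q - c\<bar> \<le> 1" "\<bar>q - c\<bar> < \<delta>" unfolding \<delta>_def by auto
  have small: "B * \<bar>q - c\<bar> < \<epsilon> / 3"
  proof -
    have "B * \<bar>q - c\<bar> \<le> (\<bar>B\<bar> + 1) * \<bar>q - c\<bar>" by (intro mult_right_mono) auto
    also have "\<dots> < (\<bar>B\<bar> + 1) * (\<epsilon> / (3 * (\<bar>B\<bar> + 1)))"
      using q(2) unfolding \<delta>_def by (intro mult_strict_left_mono) (auto simp: add_pos_nonneg)
    also have "\<dots> = \<epsilon> / 3"
      using abs_ge_zero[of B] by (simp add: field_simps del: abs_ge_zero)
    finally show ?thesis .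
  qed
  obtain N where N: "\<And>L. L \<ge> N \<Longrightarrow> \<bar>A L q - F q\<bar> < \<epsilon> / 3"
    using LIMSEQ_D[OF rat[OF \<open>q \<in> \<rat>\<close>], of "\<epsilon> / 3"] \<open>0 < \<epsilon>\<close> by auto
  have "norm (A L c - F c) < \<epsilon>" if "L \<ge> N" for L
  proof -
    have "\<bar>A L c - F c\<bar> \<le> \<bar>A L q - A L c\<bar> + \<bar>A L q - F q\<bar> + \<bar>F q - F c\<bar>"
      by (smt (verit))
    then show ?thesis
      using lipschitz_A[OF q(1), of L] lipschitz_F[OF q(1)] N[OF that] small by simp
  qed
  then show "\<exists>N. \<forall>L\<ge>N. norm (A L c - F c) < \<epsilon>" by blast
qed

definition tilted_sum :: "(nat \<Rightarrow> 'a::real_inner) \<Rightarrow> nat \<Rightarrow> 'a \<Rightarrow> ('a \<Rightarrow> 'b::real_vector) \<Rightarrow> 'b" where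
  "tilted_sum x L \<theta> f = (\<Sum>k\<in>{1..L}. exp (x k \<bullet> \<theta>) *\<^sub>R f (x k))"

definition emp_tilted_mean :: "(nat \<Rightarrow> 'a::real_inner) \<Rightarrow> nat \<Rightarrow> 'a \<Rightarrow> ('a \<Rightarrow> real) \<Rightarrow> real" where
  "emp_tilted_mean x L \<theta> f = tilted_sum x L \<theta> f / tilted_sum x L \<theta> (\<lambda>_. 1)"

definition lipschitz_weight :: "'a::real_inner \<Rightarrow> real \<Rightarrow> ('a \<Rightarrow> real) \<Rightarrow> 'a \<Rightarrow> real" where
  "lipschitz_weight \<mu> R f y = \<bar>f y\<bar> * (\<bar>y \<bullet> \<mu>\<bar> * exp (R * \<bar>y \<bullet> \<mu>\<bar>))"

definition inner_monomial :: "'a::real_inner list \<Rightarrow> 'a \<Rightarrow> real" where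
  "inner_monomial as y = (\<Prod>a\<leftarrow>as. y \<bullet> a)"

lemma inner_monomial_simps [simp]:
  "inner_monomial [] y = 1"
  "inner_monomial (a # as) y = (y \<bullet> a) * inner_monomial as y"
  by (simp_all add: inner_monomial_def)

lemma inner_monomial_append: "inner_monomial (as @ bs) y = inner_monomial as y * inner_monomial bs y"
  by (induction as) simp_all

lemma inner_monomial_measurable [measurable]:
  "inner_monomial as \<in> borel_measurable (borel :: 'a::euclidean_space measure)"
  by (induction as) simp_all

lemma exp_bounded_inner_monomial: "exp_bounded (\<lambda>y. inner_monomial as (y + m))"
  by (induction as) (simp_all add: inner_add_left exp_bounded_intros)

lemma abs_exp_scaled_diff_le:
  fixes a c c' R :: real
  assumes "\<bar>c\<bar> \<le> R" "\<bar>c'\<bar> \<le> R"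
  shows "\<bar>exp (c * a) - exp (c' * a)\<bar> \<le> \<bar>c - c'\<bar> * (\<bar>a\<bar> * exp (R * \<bar>a\<bar>))"
proof -
  have "max \<bar>c * a\<bar> \<bar>c' * a\<bar> \<le> R * \<bar>a\<bar>"
    using assms by (simp add: abs_mult mult_right_mono)
  then have le: "\<bar>exp (c * a) - exp (c' * a)\<bar> \<le> \<bar>c * a - c' * a\<bar> * exp (R * \<bar>a\<bar>)"
    using abs_exp_diff_le[of "c * a" "c' * a"] by (meson abs_ge_zero exp_le_cancel_iff mult_left_mono order_trans)
  have "\<bar>c * a - c' * a\<bar> * exp (R * \<bar>a\<bar>) = \<bar>c - c'\<bar> * (\<bar>a\<bar> * exp (R * \<bar>a\<bar>))"
    unfolding left_diff_distrib[symmetric] abs_mult by (simp add: mult_ac)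
  then show ?thesis using le by simp
qed

lemma tilted_sum_lipschitz:
  fixes f :: "'a::real_inner \<Rightarrow> real"
  assumes "\<bar>c\<bar> \<le> R" "\<bar>c'\<bar> \<le> R"
  shows "\<bar>tilted_sum x L (c *\<^sub>R \<mu>) f - tilted_sum x L (c' *\<^sub>R \<mu>) f\<bar>
    \<le> \<bar>c - c'\<bar> * (\<Sum>k\<in>{1..L}. lipschitz_weight \<mu> R f (x k))"
proof -
  have "\<bar>tilted_sum x L (c *\<^sub>R \<mu>) f - tilted_sum x L (c' *\<^sub>R \<mu>) f\<bar>
      = \<bar>\<Sum>k\<in>{1..L}. (exp (c * (x k \<bullet> \<mu>)) - exp (c' * (x k \<bullet> \<mu>))) * f (x k)\<bar>"
    unfolding tilted_sum_def by (simp add: sum_subtractf[symmetric] left_diff_distrib)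
  also have "\<dots> \<le> (\<Sum>k\<in>{1..L}. \<bar>c - c'\<bar> * lipschitz_weight \<mu> R f (x k))"
  proof (intro order_trans[OF sum_abs] sum_mono)
    fix k
    have "\<bar>exp (c * (x k \<bullet> \<mu>)) - exp (c' * (x k \<bullet> \<mu>))\<bar> * \<bar>f (x k)\<bar>
        \<le> (\<bar>c - c'\<bar> * (\<bar>x k \<bullet> \<mu>\<bar> * exp (R * \<bar>x k \<bullet> \<mu>\<bar>))) * \<bar>f (x k)\<bar>"
      by (rule mult_right_mono[OF abs_exp_scaled_diff_le[OF assms]]) simp
    then show "\<bar>(exp (c * (x k \<bullet> \<mu>)) - exp (c' * (x k \<bullet> \<mu>))) * f (x k)\<bar>
        \<le> \<bar>c - c'\<bar> * lipschitz_weight \<mu> R f (x k)"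
      by (simp add: lipschitz_weight_def abs_mult mult_ac)
  qed
  finally show ?thesis by (simp add: sum_distrib_left)
qed

lemma tilted_sum_lincomb:
  fixes f :: "'i \<Rightarrow> 'a::real_inner \<Rightarrow> real"
  shows "finite I \<Longrightarrow> tilted_sum x L \<theta> (\<lambda>y. \<Sum>i\<in>I. r i * f i y) = (\<Sum>i\<in>I. r i * tilted_sum x L \<theta> (f i))"
  unfolding tilted_sum_def by (simp add: sum_distrib_left sum.swap[of _ I] mult_ac)

lemma emp_tilted_mean_lincomb:
  fixes f :: "'i \<Rightarrow> 'a::real_inner \<Rightarrow> real"
  shows "finite I \<Longrightarrow> emp_tilted_mean x L \<theta> (\<lambda>y. \<Sum>i\<in>I. r i * f i y) = (\<Sum>i\<in>I. r i * emp_tilted_mean x L \<theta> (f i))"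
  unfolding emp_tilted_mean_def by (simp add: tilted_sum_lincomb sum_divide_distrib)

lemma exp_bounded_lipschitz_weight:
  fixes \<mu> :: "'a::real_inner"
  assumes "exp_bounded f" "0 \<le> R"
  shows "exp_bounded (lipschitz_weight \<mu> R f)"
proof -
  have "lipschitz_weight \<mu> R f = (\<lambda>y. \<bar>f y\<bar> * (\<bar>y \<bullet> \<mu>\<bar> * exp \<bar>y \<bullet> (R *\<^sub>R \<mu>)\<bar>))"
    using assms(2) by (auto simp: lipschitz_weight_def abs_mult)
  then show ?thesis using assms(1) by (simp only:) (intro exp_bounded_intros)
qed

lemma lipschitz_weight_measurable [measurable]:
  fixes \<mu> :: "'a::euclidean_space"
  assumes [measurable]: "f \<in> borel_measurable borel"
  shows "lipschitz_weight \<mu> R f \<in> borel_measurable borel"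
  unfolding lipschitz_weight_def[abs_def] by measurable

context centered_gaussian
begin

lemma tilted_integral_lipschitz:
  assumes "exp_bounded f" and [measurable]: "f \<in> borel_measurable borel"
    and "\<bar>c\<bar> \<le> R" "\<bar>c'\<bar> \<le> R"
  shows "\<bar>(\<integral>x. dens x * (exp (x \<bullet> (c *\<^sub>R \<mu>)) * f x) \<partial>lborel) - (\<integral>x. dens x * (exp (x \<bullet> (c' *\<^sub>R \<mu>)) * f x) \<partial>lborel)\<bar>
    \<le> \<bar>c - c'\<bar> * (\<integral>x. dens x * lipschitz_weight \<mu> R f x \<partial>lborel)"
proof -
  have "0 \<le> R" using assms(3) by linarith
  have int: "integrable lborel (\<lambda>x. dens x * (exp (x \<bullet> (t *\<^sub>R \<mu>)) * f x))" for t
    using assms(1) by (intro integrable_dens_mult exp_bounded_intros) measurable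
  have int_weight: "integrable lborel (\<lambda>x. dens x * lipschitz_weight \<mu> R f x)"
    by (intro integrable_dens_mult exp_bounded_lipschitz_weight assms(1) \<open>0 \<le> R\<close>) measurable
  have "\<bar>(\<integral>x. dens x * (exp (x \<bullet> (c *\<^sub>R \<mu>)) * f x) \<partial>lborel) - (\<integral>x. dens x * (exp (x \<bullet> (c' *\<^sub>R \<mu>)) * f x) \<partial>lborel)\<bar>
      = \<bar>\<integral>x. dens x * ((exp (c * (x \<bullet> \<mu>)) - exp (c' * (x \<bullet> \<mu>))) * f x) \<partial>lborel\<bar>"
    using int[of c] int[of c'] by (simp add: algebra_simps)
  also have "\<dots> \<le> (\<integral>x. \<bar>c - c'\<bar> * (dens x * lipschitz_weight \<mu> R f x) \<partial>lborel)"
  proof (rule integral_abs_bound[THEN order_trans], rule integral_mono)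
    show "integrable lborel (\<lambda>x. \<bar>dens x * ((exp (c * (x \<bullet> \<mu>)) - exp (c' * (x \<bullet> \<mu>))) * f x)\<bar>)"
      using int[of c] int[of c'] by (intro integrable_abs) (simp add: algebra_simps)
    show "integrable lborel (\<lambda>x. \<bar>c - c'\<bar> * (dens x * lipschitz_weight \<mu> R f x))"
      using int_weight by simp
    fix x
    have "\<bar>exp (c * (x \<bullet> \<mu>)) - exp (c' * (x \<bullet> \<mu>))\<bar> * \<bar>f x\<bar>
        \<le> (\<bar>c - c'\<bar> * (\<bar>x \<bullet> \<mu>\<bar> * exp (R * \<bar>x \<bullet> \<mu>\<bar>))) * \<bar>f x\<bar>"
      by (rule mult_right_mono[OF abs_exp_scaled_diff_le[OF assms(3,4)]]) simp
    then show "\<bar>dens x * ((exp (c * (x \<bullet> \<mu>)) - exp (c' * (x \<bullet> \<mu>))) * f x)\<bar>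
        \<le> \<bar>c - c'\<bar> * (dens x * lipschitz_weight \<mu> R f x)"
      using dens_nonneg[of x] mult_left_mono
      by (fastforce simp: lipschitz_weight_def abs_mult mult_ac)
  qed
  finally show ?thesis by simp
qed

end

locale gaussian_samples = centered_gaussian S + prob_space M
  for S :: "real^'d^'d" and M :: "'w measure" +
  fixes X :: "nat \<Rightarrow> 'w \<Rightarrow> real^'d"
  assumes indep: "indep_vars (\<lambda>_. borel) X {1..}"
    and distributed: "\<And>k. k \<ge> 1 \<Longrightarrow> distributed M lborel (X k) (\<lambda>x. ennreal (mvn_density S x))"
begin

lemma X_measurable [measurable]: "k \<ge> 1 \<Longrightarrow> X k \<in> borel_measurable M"
  using indep by (auto simp: indep_vars_def)

lemma expectation_X:
  assumes [measurable]: "g \<in> borel_measurable borel" and "k \<ge> 1"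
  shows "expectation (\<lambda>\<omega>. g (X k \<omega>)) = (\<integral>x. dens x * g x \<partial>lborel)"
  using distributed_integral[OF distributed[OF \<open>k \<ge> 1\<close>], of g] dens_nonneg by simp

lemma integrable_X:
  assumes "exp_bounded g" and [measurable]: "g \<in> borel_measurable borel" and "k \<ge> 1"
  shows "integrable M (\<lambda>\<omega>. g (X k \<omega>))"
  using distributed_integrable[OF distributed[OF \<open>k \<ge> 1\<close>], of g] dens_nonneg
    integrable_dens_mult[OF assms(1,2)] by simp

lemma strong_law_exp_bounded:
  assumes "exp_bounded \<psi>" and [measurable]: "\<psi> \<in> borel_measurable borel"
  shows "AE \<omega> in M. (\<lambda>L. (\<Sum>k\<in>{1..L}. \<psi> (X k \<omega>)) / real L) \<longlonglongrightarrow> (\<integral>x. dens x * \<psi> x \<partial>lborel)"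
proof -
  define m where "m = (\<integral>x. dens x * \<psi> x \<partial>lborel)"
  define Z where "Z k \<omega> = \<psi> (X k \<omega>) - m" for k \<omega>
  define B where "B = max (\<integral>x. dens x * (\<psi> x - m) ^ 2 \<partial>lborel) (\<integral>x. dens x * (\<psi> x - m) ^ 4 \<partial>lborel)"
  have bounded_power: "exp_bounded (\<lambda>x. (\<psi> x - m) ^ n)" for n
    using assms(1) by (intro exp_bounded_intros)
  have "AE \<omega> in M. (\<lambda>L. (\<Sum>k\<in>{1..L}. Z k \<omega>) / real L) \<longlonglongrightarrow> 0"
  proof (rule strong_law_fourth_moment)
    show "indep_vars (\<lambda>_. borel) Z {1..}"
      unfolding Z_def by (rule indep_vars_compose2[OF indep]) measurable
    fix k :: nat assume "k \<ge> 1"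
    show "integrable M (\<lambda>\<omega>. Z k \<omega> ^ 4)"
      unfolding Z_def using integrable_X[OF bounded_power _ \<open>k \<ge> 1\<close>] by simp
    show "expectation (Z k) = 0"
      unfolding Z_def m_def using integrable_X[OF assms \<open>k \<ge> 1\<close>] expectation_X[OF _ \<open>k \<ge> 1\<close>, of \<psi>]
      by (simp add: prob_space)
    show "expectation (\<lambda>\<omega>. Z k \<omega> ^ 2) \<le> B"
      unfolding Z_def B_def using expectation_X[OF _ \<open>k \<ge> 1\<close>, of "\<lambda>x. (\<psi> x - m) ^ 2"] by simp
    show "expectation (\<lambda>\<omega>. Z k \<omega> ^ 4) \<le> B"
      unfolding Z_def B_def using expectation_X[OF _ \<open>k \<ge> 1\<close>, of "\<lambda>x. (\<psi> x - m) ^ 4"] by simp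
  qed
  then show ?thesis
  proof (rule AE_mp, intro AE_I2 impI)
    fix \<omega> assume "(\<lambda>L. (\<Sum>k\<in>{1..L}. Z k \<omega>) / real L) \<longlonglongrightarrow> 0"
    then have "(\<lambda>L. (\<Sum>k\<in>{1..L}. Z k \<omega>) / real L + m) \<longlonglongrightarrow> m"
      by (auto intro: tendsto_eq_intros)
    moreover have "\<forall>\<^sub>F L in sequentially. (\<Sum>k\<in>{1..L}. Z k \<omega>) / real L + m = (\<Sum>k\<in>{1..L}. \<psi> (X k \<omega>)) / real L"
      using eventually_ge_at_top[of 1] by eventually_elim (simp add: Z_def sum_subtractf field_simps)
    ultimately show "(\<lambda>L. (\<Sum>k\<in>{1..L}. \<psi> (X k \<omega>)) / real L) \<longlonglongrightarrow> (\<integral>x. dens x * \<psi> x \<partial>lborel)"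
      unfolding m_def by (rule Lim_transform_eventually)
  qed
qed

end

context centered_gaussian
begin

lemma tilted_sum_tendsto_of_rationals:
  assumes "exp_bounded f" and [measurable]: "f \<in> borel_measurable borel"
    and rat: "\<And>q::rat. (\<lambda>L. tilted_sum x L (of_rat q *\<^sub>R \<mu>) f / real L)
      \<longlonglongrightarrow> (\<integral>y. dens y * (exp (y \<bullet> (of_rat q *\<^sub>R \<mu>)) * f y) \<partial>lborel)"
    and conv: "\<And>R::nat. convergent (\<lambda>L. (\<Sum>k\<in>{1..L}. lipschitz_weight \<mu> R f (x k)) / real L)"
  shows "(\<lambda>L. tilted_sum x L (c *\<^sub>R \<mu>) f / real L)
    \<longlonglongrightarrow> (\<integral>y. dens y * (exp (y \<bullet> (c *\<^sub>R \<mu>)) * f y) \<partial>lborel)"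
proof -
  define R where "R = nat \<lceil>\<bar>c\<bar>\<rceil> + 1"
  have R: "\<bar>q\<bar> \<le> real R" if "\<bar>q - c\<bar> \<le> 1" for q
    using that unfolding R_def by linarith
  obtain K where K: "\<And>L. \<bar>(\<Sum>k\<in>{1..L}. lipschitz_weight \<mu> R f (x k)) / real L\<bar> \<le> K"
    using convergent_imp_Bseq[OF conv[of R]] by (auto simp: Bseq_def)
  define J where "J = (\<integral>y. dens y * lipschitz_weight \<mu> R f y \<partial>lborel)"
  have "0 \<le> K" using K[of 0] by simp
  have "0 \<le> J"
    unfolding J_def lipschitz_weight_def by (intro integral_nonneg_AE) (simp add: dens_nonneg)
  show ?thesis
  proof (rule tendsto_of_tendsto_rationals[where B="K + J"
      and A="\<lambda>L q. tilted_sum x L (q *\<^sub>R \<mu>) f / real L"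
      and F="\<lambda>q. \<integral>y. dens y * (exp (y \<bullet> (q *\<^sub>R \<mu>)) * f y) \<partial>lborel"])
    show "(\<lambda>L. tilted_sum x L (q *\<^sub>R \<mu>) f / real L) \<longlonglongrightarrow> (\<integral>y. dens y * (exp (y \<bullet> (q *\<^sub>R \<mu>)) * f y) \<partial>lborel)"
      if "q \<in> \<rat>" for q
      using that rat by (auto elim: Rats_cases)
  next
    fix L q assume "\<bar>q - c\<bar> \<le> 1"
    then have diff: "\<bar>tilted_sum x L (q *\<^sub>R \<mu>) f - tilted_sum x L (c *\<^sub>R \<mu>) f\<bar>
        \<le> \<bar>q - c\<bar> * (\<Sum>k\<in>{1..L}. lipschitz_weight \<mu> R f (x k))"
      using R[of c] by (intro tilted_sum_lipschitz R) auto
    have "\<bar>tilted_sum x L (q *\<^sub>R \<mu>) f - tilted_sum x L (c *\<^sub>R \<mu>) f\<bar> / real L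
        \<le> \<bar>q - c\<bar> * ((\<Sum>k\<in>{1..L}. lipschitz_weight \<mu> R f (x k)) / real L)"
      using divide_right_mono[OF diff, of "real L"] by simp
    also have "\<dots> \<le> \<bar>q - c\<bar> * (K + J)"
    proof (rule mult_left_mono)
      show "(\<Sum>k\<in>{1..L}. lipschitz_weight \<mu> R f (x k)) / real L \<le> K + J"
        using K[of L] \<open>0 \<le> J\<close> by linarith
    qed simp
    finally show "\<bar>tilted_sum x L (q *\<^sub>R \<mu>) f / real L - tilted_sum x L (c *\<^sub>R \<mu>) f / real L\<bar> \<le> (K + J) * \<bar>q - c\<bar>"
      by (simp add: diff_divide_distrib[symmetric] mult.commute)
  next
    fix q assume "\<bar>q - c\<bar> \<le> 1"
    then have "\<bar>(\<integral>y. dens y * (exp (y \<bullet> (q *\<^sub>R \<mu>)) * f y) \<partial>lborel) - (\<integral>y. dens y * (exp (y \<bullet> (c *\<^sub>R \<mu>)) * f y) \<partial>lborel)\<bar>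
        \<le> \<bar>q - c\<bar> * J"
      unfolding J_def using R R[of c] by (intro tilted_integral_lipschitz assms(1,2)) auto
    also have "\<dots> \<le> (K + J) * \<bar>q - c\<bar>"
      using mult_right_mono[of J "K + J" "\<bar>q - c\<bar>"] \<open>0 \<le> K\<close> by (simp add: mult.commute)
    finally show "\<bar>(\<integral>y. dens y * (exp (y \<bullet> (q *\<^sub>R \<mu>)) * f y) \<partial>lborel) - (\<integral>y. dens y * (exp (y \<bullet> (c *\<^sub>R \<mu>)) * f y) \<partial>lborel)\<bar>
        \<le> (K + J) * \<bar>q - c\<bar>" .
  qed
qed

end

lemma (in gaussian_samples) AE_tilted_sum_tendsto:
  assumes "exp_bounded f" and [measurable]: "f \<in> borel_measurable borel"
  shows "AE \<omega> in M. \<forall>c. (\<lambda>L. tilted_sum (\<lambda>k. X k \<omega>) L (c *\<^sub>R \<mu>) f / real L)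
    \<longlonglongrightarrow> (\<integral>y. dens y * (exp (y \<bullet> (c *\<^sub>R \<mu>)) * f y) \<partial>lborel)"
proof -
  have "AE \<omega> in M. \<forall>q::rat. (\<lambda>L. tilted_sum (\<lambda>k. X k \<omega>) L (of_rat q *\<^sub>R \<mu>) f / real L)
      \<longlonglongrightarrow> (\<integral>y. dens y * (exp (y \<bullet> (of_rat q *\<^sub>R \<mu>)) * f y) \<partial>lborel)"
  proof (unfold AE_all_countable, intro allI)
    fix q :: rat
    have "exp_bounded (\<lambda>y. exp (y \<bullet> (of_rat q *\<^sub>R \<mu>)) * f y)"
      using assms(1) by (intro exp_bounded_intros)
    from strong_law_exp_bounded[OF this]
    show "AE \<omega> in M. (\<lambda>L. tilted_sum (\<lambda>k. X k \<omega>) L (of_rat q *\<^sub>R \<mu>) f / real L)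
        \<longlonglongrightarrow> (\<integral>y. dens y * (exp (y \<bullet> (of_rat q *\<^sub>R \<mu>)) * f y) \<partial>lborel)"
      by (simp add: tilted_sum_def)
  qed
  moreover have "AE \<omega> in M. \<forall>R::nat. convergent (\<lambda>L. (\<Sum>k\<in>{1..L}. lipschitz_weight \<mu> R f (X k \<omega>)) / real L)"
  proof (unfold AE_all_countable, intro allI)
    fix R :: nat
    have "AE \<omega> in M. (\<lambda>L. (\<Sum>k\<in>{1..L}. lipschitz_weight \<mu> R f (X k \<omega>)) / real L)
        \<longlonglongrightarrow> (\<integral>y. dens y * lipschitz_weight \<mu> R f y \<partial>lborel)"
      by (intro strong_law_exp_bounded exp_bounded_lipschitz_weight assms lipschitz_weight_measurable
          of_nat_0_le_iff)
    then show "AE \<omega> in M. convergent (\<lambda>L. (\<Sum>k\<in>{1..L}. lipschitz_weight \<mu> R f (X k \<omega>)) / real L)"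
      by (rule AE_mp) (auto intro!: AE_I2 convergentI)
  qed
  ultimately show ?thesis
    by (rule AE_mp[OF AE_conjI], intro AE_I2 impI allI)
      (rule tilted_sum_tendsto_of_rationals[OF assms]; auto)
qed

lemma inner_monomial_Cons_append:
  fixes a :: "real^'d"
  shows "inner_monomial (a # as @ bs) y = (\<Sum>i\<in>UNIV. a $ i * inner_monomial (as @ axis i 1 # bs) y)"
proof -
  have "y \<bullet> a = (\<Sum>i\<in>UNIV. a $ i * (y \<bullet> axis i 1))"
    by (simp add: inner_vec_def[of y a] inner_axis mult.commute)
  then show ?thesis
    by (simp add: inner_monomial_append sum_distrib_left sum_distrib_right mult_ac)
qed

lemma emp_tilted_mean_eq_ratio:
  "emp_tilted_mean x L \<theta> f = (tilted_sum x L \<theta> f / real L) / (tilted_sum x L \<theta> (\<lambda>_. 1) / real L)"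
  unfolding emp_tilted_mean_def by (cases "L = 0") (simp_all add: tilted_sum_def)

context centered_gaussian
begin

lemma gauss_mean_lincomb:
  assumes "finite I" "\<And>i. i \<in> I \<Longrightarrow> integrable lborel (\<lambda>y. dens y * f i (y + m))"
  shows "gauss_mean m (\<lambda>y. \<Sum>i\<in>I. r i * f i y) = (\<Sum>i\<in>I. r i * gauss_mean m (f i))"
  unfolding gauss_mean_def using assms
  by (simp add: sum_distrib_left mult.left_commute Bochner_Integration.integral_sum)

text \<open>The averages are only controlled for coordinate monomials (countably many test functions);
  multilinearity of inner monomials spreads convergence to arbitrary directions.\<close>
lemma emp_tilted_mean_tendsto_inner_monomial:
  fixes x :: "nat \<Rightarrow> real^'d"
  assumes coord: "\<And>is c. length is \<le> n \<Longrightarrow>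
      (\<lambda>L. tilted_sum x L (c *\<^sub>R \<mu>) (inner_monomial (map (\<lambda>i. axis i 1) is)) / real L)
      \<longlonglongrightarrow> (\<integral>y. dens y * (exp (y \<bullet> (c *\<^sub>R \<mu>)) * inner_monomial (map (\<lambda>i. axis i 1) is) y) \<partial>lborel)"
    and "length as \<le> n"
  shows "(\<lambda>L. emp_tilted_mean x L (c *\<^sub>R \<mu>) (inner_monomial as))
    \<longlonglongrightarrow> gauss_mean (S *v (c *\<^sub>R \<mu>)) (inner_monomial as)"
proof -
  define m where "m = S *v (c *\<^sub>R \<mu>)"
  have tilted_integral: "(\<integral>y. dens y * (exp (y \<bullet> (c *\<^sub>R \<mu>)) * f y) \<partial>lborel) = mgf (c *\<^sub>R \<mu>) * gauss_mean m f"
    if [measurable]: "f \<in> borel_measurable borel" for f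
    unfolding m_def by (rule integral_dens_exp_inner_mult) measurable
  note coord_limit = coord[of _ c, unfolded tilted_integral[OF inner_monomial_measurable]]
  have "mgf (c *\<^sub>R \<mu>) \<noteq> 0" by (simp add: mgf_def)
  have "inner_monomial [] = (\<lambda>_::real^'d. 1)" by (simp add: fun_eq_iff)
  then have denominator: "(\<lambda>L. tilted_sum x L (c *\<^sub>R \<mu>) (\<lambda>_. 1) / real L) \<longlonglongrightarrow> mgf (c *\<^sub>R \<mu>)"
    using coord_limit[of "[]"] by (simp add: gauss_mean_const)
  have "(\<lambda>L. emp_tilted_mean x L (c *\<^sub>R \<mu>) (inner_monomial (as @ map (\<lambda>i. axis i 1) is)))
      \<longlonglongrightarrow> gauss_mean m (inner_monomial (as @ map (\<lambda>i. axis i 1) is))"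
    if "length as + length is \<le> n" for "is"
    using that
  proof (induction as arbitrary: "is")
    case Nil
    let ?f = "inner_monomial (map (\<lambda>i. axis i 1) is)"
    have "(\<lambda>L. (tilted_sum x L (c *\<^sub>R \<mu>) ?f / real L) / (tilted_sum x L (c *\<^sub>R \<mu>) (\<lambda>_. 1) / real L))
        \<longlonglongrightarrow> mgf (c *\<^sub>R \<mu>) * gauss_mean m ?f / mgf (c *\<^sub>R \<mu>)"
      using Nil by (intro tendsto_divide coord_limit denominator \<open>mgf (c *\<^sub>R \<mu>) \<noteq> 0\<close>) simp
    then show ?case
      unfolding emp_tilted_mean_eq_ratio using \<open>mgf (c *\<^sub>R \<mu>) \<noteq> 0\<close> by simp
  next
    case (Cons a as)
    let ?g = "\<lambda>i. inner_monomial (as @ map (\<lambda>i. axis i 1) (i # is))"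
    have expand: "inner_monomial ((a # as) @ map (\<lambda>i. axis i 1) is) = (\<lambda>y. \<Sum>i\<in>UNIV. a $ i * ?g i y)"
      by (rule ext) (simp only: append_Cons list.map inner_monomial_Cons_append)
    have limits: "(\<lambda>L. emp_tilted_mean x L (c *\<^sub>R \<mu>) (?g i)) \<longlonglongrightarrow> gauss_mean m (?g i)" for i
      using Cons.prems by (intro Cons.IH) simp
    have linear: "gauss_mean m (\<lambda>y. \<Sum>i\<in>UNIV. a $ i * ?g i y) = (\<Sum>i\<in>UNIV. a $ i * gauss_mean m (?g i))"
      by (intro gauss_mean_lincomb integrable_dens_mult exp_bounded_inner_monomial finite_class.finite_UNIV) measurable
    show ?case
      unfolding expand emp_tilted_mean_lincomb[OF finite_class.finite_UNIV] linear
      by (intro tendsto_sum tendsto_mult_left limits)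
  qed
  from this[of "[]"] show ?thesis using assms(2) by (simp add: m_def)
qed

end

section \<open>Derivatives of the attention estimator\<close>

lemma has_derivative_quotient:
  fixes N :: "'a::real_normed_vector \<Rightarrow> 'b::real_normed_vector" and D :: "'a \<Rightarrow> real"
  assumes "(N has_derivative N') (at v)" "(D has_derivative D') (at v)" "D v \<noteq> 0"
  shows "((\<lambda>v. N v /\<^sub>R D v) has_derivative (\<lambda>h. (1 / D v) *\<^sub>R N' h - (D' h / (D v)\<^sup>2) *\<^sub>R N v)) (at v)"
  using assms
  by (auto intro!: derivative_eq_intros simp: fun_eq_iff field_simps power2_eq_square scaleR_diff_right)

lemma has_derivative_quotient_derivative:
  fixes N N1 :: "'a::real_normed_vector \<Rightarrow> 'b::real_normed_vector" and D D1 :: "'a \<Rightarrow> real"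
  assumes "(N has_derivative N') (at v)" "(D has_derivative D') (at v)"
    "(N1 has_derivative N1') (at v)" "(D1 has_derivative D1') (at v)" "D v \<noteq> 0"
  shows "((\<lambda>v. (1 / D v) *\<^sub>R N1 v - (D1 v / (D v)\<^sup>2) *\<^sub>R N v) has_derivative
     (\<lambda>g. (1 / D v) *\<^sub>R N1' g - (D' g / (D v)\<^sup>2) *\<^sub>R N1 v - (D1' g / (D v)\<^sup>2) *\<^sub>R N v
        + (2 * D1 v * D' g / (D v)^3) *\<^sub>R N v - (D1 v / (D v)\<^sup>2) *\<^sub>R N' g)) (at v)"
proof -
  let ?c = "\<lambda>g. (D1' g * (D v)\<^sup>2 - D1 v * (2 * D v * D' g)) / ((D v)\<^sup>2)\<^sup>2"
  have deriv: "((\<lambda>v. (1 / D v) *\<^sub>R N1 v - (D1 v / (D v)\<^sup>2) *\<^sub>R N v) has_derivative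
     (\<lambda>g. (1 / D v) *\<^sub>R N1' g + (- (D' g / (D v)\<^sup>2)) *\<^sub>R N1 v - ((D1 v / (D v)\<^sup>2) *\<^sub>R N' g + ?c g *\<^sub>R N v))) (at v)"
    using assms by (intro derivative_eq_intros) (auto simp: power2_eq_square)
  have coefficient: "?c g = D1' g / (D v)\<^sup>2 - 2 * D1 v * D' g / (D v)^3" for g
    using assms(5) by (simp add: field_simps power2_eq_square power3_eq_cube)
  show ?thesis
    using deriv[unfolded coefficient]
    by (elim has_derivative_eq_rhs) (simp add: fun_eq_iff scaleR_diff_left algebra_simps)
qed

definition tilt_vec :: "real \<Rightarrow> 'a::real_inner \<Rightarrow> 'a \<Rightarrow> 'a" where
  "tilt_vec lam x1 v = (lam * (x1 \<bullet> v)) *\<^sub>R v"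

definition tilt_deriv :: "real \<Rightarrow> 'a::real_inner \<Rightarrow> 'a \<Rightarrow> 'a \<Rightarrow> 'a" where
  "tilt_deriv lam x1 v h = lam *\<^sub>R ((x1 \<bullet> h) *\<^sub>R v + (x1 \<bullet> v) *\<^sub>R h)"

lemma has_derivative_tilt_vec: "(tilt_vec lam x1 has_derivative tilt_deriv lam x1 v) (at v)"
  unfolding tilt_vec_def[abs_def] tilt_deriv_def
  by (auto intro!: derivative_eq_intros simp: fun_eq_iff algebra_simps)

lemma has_derivative_tilt_deriv:
  "((\<lambda>v. tilt_deriv lam x1 v h) has_derivative (\<lambda>g. tilt_deriv lam x1 g h)) (at v)"
  unfolding tilt_deriv_def
  by (auto intro!: derivative_eq_intros simp: fun_eq_iff algebra_simps)

lemma has_derivative_tilted_sum: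
  fixes \<theta> :: "'v::real_normed_vector \<Rightarrow> 'a::real_inner" and f :: "'v \<Rightarrow> 'a \<Rightarrow> 'b::real_normed_vector"
  assumes "(\<theta> has_derivative \<theta>') (at v)"
    and "\<And>k. ((\<lambda>v. f v (x k)) has_derivative f' (x k)) (at v)"
  shows "((\<lambda>v. tilted_sum x L (\<theta> v) (f v)) has_derivative
    (\<lambda>g. tilted_sum x L (\<theta> v) (\<lambda>y. (y \<bullet> \<theta>' g) *\<^sub>R f v y + f' y g))) (at v)"
  unfolding tilted_sum_def using assms
  by (auto intro!: derivative_eq_intros simp: fun_eq_iff scaleR_add_right inner_commute algebra_simps)

lemma has_derivative_tilted_sum_const:
  fixes \<theta> :: "'v::real_normed_vector \<Rightarrow> 'a::real_inner" and f :: "'a \<Rightarrow> 'b::real_normed_vector"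
  assumes "(\<theta> has_derivative \<theta>') (at v)"
  shows "((\<lambda>v. tilted_sum x L (\<theta> v) f) has_derivative (\<lambda>g. tilted_sum x L (\<theta> v) (\<lambda>y. (y \<bullet> \<theta>' g) *\<^sub>R f y))) (at v)"
  using has_derivative_tilted_sum[OF assms, where f="\<lambda>_. f" and f'="\<lambda>_ _. 0" and x=x and L=L] by simp

lemma tilted_sum_add: "tilted_sum x L \<theta> (\<lambda>y. f y + g y) = tilted_sum x L \<theta> f + tilted_sum x L \<theta> g"
  unfolding tilted_sum_def by (simp add: scaleR_add_right sum.distrib)

lemma tilted_sum_inner: "tilted_sum x L \<theta> f \<bullet> u = tilted_sum x L \<theta> (\<lambda>y. f y \<bullet> u)"
  unfolding tilted_sum_def by (simp add: inner_sum_left)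

lemma tilted_sum_pos: "L \<ge> 1 \<Longrightarrow> 0 < tilted_sum x L \<theta> (\<lambda>_. 1::real)"
  unfolding tilted_sum_def real_scaleR_def by (intro sum_pos) auto

lemma T_L_eq_tilted_sum:
  "T_L lam x L v = tilted_sum x L (tilt_vec lam (x 1) v) (\<lambda>y. y) /\<^sub>R tilted_sum x L (tilt_vec lam (x 1) v) (\<lambda>_. 1)"
  unfolding T_L_def tilted_sum_def tilt_vec_def by (simp add: mult_ac)

lemma D1_T_L:
  fixes x :: "nat \<Rightarrow> real^'d" and lam :: real and v h :: "real^'d"
  assumes "L \<ge> 1"
  defines "\<theta> \<equiv> tilt_vec lam (x 1) v" and "w \<equiv> tilt_deriv lam (x 1) v h"
  shows "D1 (T_L lam x L) v h =
    (1 / tilted_sum x L \<theta> (\<lambda>_. 1)) *\<^sub>R tilted_sum x L \<theta> (\<lambda>y. (y \<bullet> w) *\<^sub>R y)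
    - (tilted_sum x L \<theta> (\<lambda>y. y \<bullet> w) / (tilted_sum x L \<theta> (\<lambda>_. 1))\<^sup>2) *\<^sub>R tilted_sum x L \<theta> (\<lambda>y. y)"
proof -
  have "(T_L lam x L has_derivative (\<lambda>h.
      (1 / tilted_sum x L \<theta> (\<lambda>_. 1)) *\<^sub>R tilted_sum x L \<theta> (\<lambda>y. (y \<bullet> tilt_deriv lam (x 1) v h) *\<^sub>R y)
      - (tilted_sum x L \<theta> (\<lambda>y. (y \<bullet> tilt_deriv lam (x 1) v h) *\<^sub>R 1) / (tilted_sum x L \<theta> (\<lambda>_. 1))\<^sup>2)
        *\<^sub>R tilted_sum x L \<theta> (\<lambda>y. y))) (at v)"
    unfolding T_L_eq_tilted_sum[abs_def] \<theta>_def
    by (intro has_derivative_quotient has_derivative_tilted_sum_const has_derivative_tilt_vec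
        tilted_sum_pos[OF assms(1), THEN less_imp_neq, symmetric])
  then show ?thesis unfolding D1_def w_def by (simp add: frechet_derivative_at[symmetric])
qed

lemma D2_T_L:
  fixes x :: "nat \<Rightarrow> real^'d" and lam :: real and v h g :: "real^'d"
  assumes "L \<ge> 1"
  defines "\<theta> \<equiv> tilt_vec lam (x 1) v" and "wh \<equiv> tilt_deriv lam (x 1) v h"
    and "wg \<equiv> tilt_deriv lam (x 1) v g" and "z \<equiv> tilt_deriv lam (x 1) g h"
    and "D \<equiv> tilted_sum x L (tilt_vec lam (x 1) v) (\<lambda>_. 1::real)"
  shows "D2 (T_L lam x L) v h g =
    (1 / D) *\<^sub>R tilted_sum x L \<theta> (\<lambda>y. ((y \<bullet> wg) * (y \<bullet> wh) + y \<bullet> z) *\<^sub>R y)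
    - (tilted_sum x L \<theta> (\<lambda>y. y \<bullet> wg) / D\<^sup>2) *\<^sub>R tilted_sum x L \<theta> (\<lambda>y. (y \<bullet> wh) *\<^sub>R y)
    - (tilted_sum x L \<theta> (\<lambda>y. (y \<bullet> wg) * (y \<bullet> wh) + y \<bullet> z) / D\<^sup>2) *\<^sub>R tilted_sum x L \<theta> (\<lambda>y. y)
    + (2 * tilted_sum x L \<theta> (\<lambda>y. y \<bullet> wh) * tilted_sum x L \<theta> (\<lambda>y. y \<bullet> wg) / D ^ 3) *\<^sub>R tilted_sum x L \<theta> (\<lambda>y. y)
    - (tilted_sum x L \<theta> (\<lambda>y. y \<bullet> wh) / D\<^sup>2) *\<^sub>R tilted_sum x L \<theta> (\<lambda>y. (y \<bullet> wg) *\<^sub>R y)"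
proof -
  let ?\<theta> = "tilt_vec lam (x 1)" and ?\<theta>' = "tilt_deriv lam (x 1)"
  have "(\<lambda>v. D1 (T_L lam x L) v h) = (\<lambda>v.
      (1 / tilted_sum x L (?\<theta> v) (\<lambda>_. 1)) *\<^sub>R tilted_sum x L (?\<theta> v) (\<lambda>y. (y \<bullet> ?\<theta>' v h) *\<^sub>R y)
      - (tilted_sum x L (?\<theta> v) (\<lambda>y. y \<bullet> ?\<theta>' v h) / (tilted_sum x L (?\<theta> v) (\<lambda>_. 1))\<^sup>2)
        *\<^sub>R tilted_sum x L (?\<theta> v) (\<lambda>y. y))"
    using D1_T_L[OF assms(1)] by blast
  moreover have "((\<lambda>v. (1 / tilted_sum x L (?\<theta> v) (\<lambda>_. 1)) *\<^sub>R tilted_sum x L (?\<theta> v) (\<lambda>y. (y \<bullet> ?\<theta>' v h) *\<^sub>R y)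
      - (tilted_sum x L (?\<theta> v) (\<lambda>y. y \<bullet> ?\<theta>' v h) / (tilted_sum x L (?\<theta> v) (\<lambda>_. 1))\<^sup>2)
        *\<^sub>R tilted_sum x L (?\<theta> v) (\<lambda>y. y)) has_derivative (\<lambda>g.
    (1 / D) *\<^sub>R tilted_sum x L \<theta> (\<lambda>y. (y \<bullet> ?\<theta>' v g) *\<^sub>R (y \<bullet> ?\<theta>' v h) *\<^sub>R y + (y \<bullet> ?\<theta>' g h) *\<^sub>R y)
    - (tilted_sum x L \<theta> (\<lambda>y. (y \<bullet> ?\<theta>' v g) *\<^sub>R 1) / D\<^sup>2) *\<^sub>R tilted_sum x L \<theta> (\<lambda>y. (y \<bullet> ?\<theta>' v h) *\<^sub>R y)
    - (tilted_sum x L \<theta> (\<lambda>y. (y \<bullet> ?\<theta>' v g) *\<^sub>R (y \<bullet> ?\<theta>' v h) + (y \<bullet> ?\<theta>' g h)) / D\<^sup>2) *\<^sub>R tilted_sum x L \<theta> (\<lambda>y. y)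
    + (2 * tilted_sum x L \<theta> (\<lambda>y. y \<bullet> ?\<theta>' v h) * tilted_sum x L \<theta> (\<lambda>y. (y \<bullet> ?\<theta>' v g) *\<^sub>R 1) / D ^ 3)
      *\<^sub>R tilted_sum x L \<theta> (\<lambda>y. y)
    - (tilted_sum x L \<theta> (\<lambda>y. y \<bullet> ?\<theta>' v h) / D\<^sup>2) *\<^sub>R tilted_sum x L \<theta> (\<lambda>y. (y \<bullet> ?\<theta>' v g) *\<^sub>R y))) (at v)"
    unfolding \<theta>_def D_def
    by (intro has_derivative_quotient_derivative has_derivative_tilted_sum_const has_derivative_tilted_sum
        has_derivative_tilt_vec tilted_sum_pos[OF assms(1), THEN less_imp_neq, symmetric]
        has_derivative_scaleR_left has_derivative_inner_right has_derivative_tilt_deriv)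
  ultimately show ?thesis
    unfolding D2_def wh_def wg_def z_def
    by (simp add: frechet_derivative_at[symmetric] scaleR_add_left)
qed

lemma T_L_inner:
  "T_L lam x L v \<bullet> u = emp_tilted_mean x L (tilt_vec lam (x 1) v) (\<lambda>y. y \<bullet> u)"
  unfolding T_L_eq_tilted_sum emp_tilted_mean_def by (simp add: tilted_sum_inner divide_inverse mult.commute)

lemma D1_T_L_inner:
  fixes x :: "nat \<Rightarrow> real^'d" and lam :: real and v h :: "real^'d"
  assumes "L \<ge> 1"
  defines "M \<equiv> emp_tilted_mean x L (tilt_vec lam (x 1) v)" and "w \<equiv> tilt_deriv lam (x 1) v h"
  shows "D1 (T_L lam x L) v h \<bullet> u = M (\<lambda>y. (y \<bullet> w) * (y \<bullet> u)) - M (\<lambda>y. y \<bullet> w) * M (\<lambda>y. y \<bullet> u)"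
  using tilted_sum_pos[OF assms(1), of x "tilt_vec lam (x 1) v"]
  unfolding D1_T_L[OF assms(1)] M_def w_def emp_tilted_mean_def
  by (simp add: tilted_sum_inner inner_diff_left field_simps power2_eq_square)

lemma D2_T_L_inner:
  fixes x :: "nat \<Rightarrow> real^'d" and lam :: real and v h g :: "real^'d"
  assumes "L \<ge> 1"
  defines "M \<equiv> emp_tilted_mean x L (tilt_vec lam (x 1) v)" and "wh \<equiv> tilt_deriv lam (x 1) v h"
    and "wg \<equiv> tilt_deriv lam (x 1) v g" and "z \<equiv> tilt_deriv lam (x 1) g h"
  shows "D2 (T_L lam x L) v h g \<bullet> u =
    M (\<lambda>y. (y \<bullet> wg) * (y \<bullet> wh) * (y \<bullet> u)) + M (\<lambda>y. (y \<bullet> z) * (y \<bullet> u))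
    - M (\<lambda>y. y \<bullet> wg) * M (\<lambda>y. (y \<bullet> wh) * (y \<bullet> u))
    - (M (\<lambda>y. (y \<bullet> wg) * (y \<bullet> wh)) + M (\<lambda>y. y \<bullet> z)) * M (\<lambda>y. y \<bullet> u)
    + 2 * M (\<lambda>y. y \<bullet> wh) * M (\<lambda>y. y \<bullet> wg) * M (\<lambda>y. y \<bullet> u)
    - M (\<lambda>y. y \<bullet> wh) * M (\<lambda>y. (y \<bullet> wg) * (y \<bullet> u))"
  using tilted_sum_pos[OF assms(1), of x "tilt_vec lam (x 1) v"]
  unfolding D2_T_L[OF assms(1)] M_def wh_def wg_def z_def emp_tilted_mean_def
  by (simp add: tilted_sum_inner inner_diff_left inner_add_left distrib_right tilted_sum_add
      field_simps power2_eq_square power3_eq_cube)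

lemma T_inf_eq_tilt_vec: "T_inf lam S x1 v = S *v tilt_vec lam x1 v"
proof -
  have "(\<chi> i j. v $ i * v $ j) *v x1 = (v \<bullet> x1) *\<^sub>R v"
    by (simp add: vec_eq_iff matrix_vector_mult_def inner_vec_def sum_distrib_left algebra_simps)
  then show ?thesis
    unfolding T_inf_def tilt_vec_def
    by (simp add: matrix_vector_mul_assoc[symmetric] matrix_vector_mult_scaleR inner_commute)
qed

lemma D1_T_inf: "D1 (T_inf lam S x1) v h = S *v tilt_deriv lam x1 v h"
proof -
  have "(T_inf lam S x1 has_derivative (\<lambda>h. S *v tilt_deriv lam x1 v h)) (at v)"
    unfolding T_inf_eq_tilt_vec[abs_def]
    by (rule bounded_linear.has_derivative[OF matrix_vector_mul_bounded_linear has_derivative_tilt_vec])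
  then show ?thesis unfolding D1_def by (simp add: frechet_derivative_at[symmetric])
qed

lemma D2_T_inf: "D2 (T_inf lam S x1) v h g = S *v tilt_deriv lam x1 g h"
proof -
  have "((\<lambda>v. D1 (T_inf lam S x1) v h) has_derivative (\<lambda>g. S *v tilt_deriv lam x1 g h)) (at v)"
    unfolding D1_T_inf
    by (rule bounded_linear.has_derivative[OF matrix_vector_mul_bounded_linear has_derivative_tilt_deriv])
  then show ?thesis unfolding D2_def by (simp add: frechet_derivative_at[symmetric])
qed

section \<open>Convergence of the estimator and its derivatives\<close>

lemma tendsto_vec_componentwise_inner:
  fixes f :: "nat \<Rightarrow> real^'d"
  assumes "\<And>u. ((\<lambda>L. f L \<bullet> u) \<longlongrightarrow> l \<bullet> u) F"
  shows "(f \<longlongrightarrow> l) F"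
  using assms by (intro vec_tendstoI) (simp add: cart_eq_inner_axis)

context centered_gaussian
begin

context
  fixes x :: "nat \<Rightarrow> real^'d" and lam :: real and \<mu> :: "real^'d"
  assumes lim: "\<And>as. length as \<le> 3 \<Longrightarrow> (\<lambda>L. emp_tilted_mean x L (tilt_vec lam (x 1) \<mu>) (inner_monomial as))
    \<longlonglongrightarrow> gauss_mean (T_inf lam S (x 1) \<mu>) (inner_monomial as)"
begin

lemma emp_tilted_moments_tendsto:
  defines "M \<equiv> \<lambda>L. emp_tilted_mean x L (tilt_vec lam (x 1) \<mu>)" and "m \<equiv> T_inf lam S (x 1) \<mu>"
  shows "(\<lambda>L. M L (\<lambda>y. y \<bullet> a)) \<longlonglongrightarrow> m \<bullet> a"
    and "(\<lambda>L. M L (\<lambda>y. (y \<bullet> a) * (y \<bullet> b))) \<longlonglongrightarrow> (m \<bullet> a) * (m \<bullet> b) + a \<bullet> (S *v b)"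
    and "(\<lambda>L. M L (\<lambda>y. (y \<bullet> a) * (y \<bullet> b) * (y \<bullet> c))) \<longlonglongrightarrow> (m \<bullet> a) * (m \<bullet> b) * (m \<bullet> c)
      + (m \<bullet> a) * (b \<bullet> (S *v c)) + (m \<bullet> b) * (a \<bullet> (S *v c)) + (m \<bullet> c) * (a \<bullet> (S *v b))"
proof -
  have "inner_monomial [a] = (\<lambda>y. y \<bullet> a)"
    and "inner_monomial [a, b] = (\<lambda>y. (y \<bullet> a) * (y \<bullet> b))"
    and "inner_monomial [a, b, c] = (\<lambda>y. (y \<bullet> a) * (y \<bullet> b) * (y \<bullet> c))"
    by (simp_all add: fun_eq_iff)
  then show "(\<lambda>L. M L (\<lambda>y. y \<bullet> a)) \<longlonglongrightarrow> m \<bullet> a"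
    and "(\<lambda>L. M L (\<lambda>y. (y \<bullet> a) * (y \<bullet> b))) \<longlonglongrightarrow> (m \<bullet> a) * (m \<bullet> b) + a \<bullet> (S *v b)"
    and "(\<lambda>L. M L (\<lambda>y. (y \<bullet> a) * (y \<bullet> b) * (y \<bullet> c))) \<longlonglongrightarrow> (m \<bullet> a) * (m \<bullet> b) * (m \<bullet> c)
      + (m \<bullet> a) * (b \<bullet> (S *v c)) + (m \<bullet> b) * (a \<bullet> (S *v c)) + (m \<bullet> c) * (a \<bullet> (S *v b))"
    using lim[of "[a]"] lim[of "[a, b]"] lim[of "[a, b, c]"] unfolding M_def m_def
    by (simp_all add: gauss_mean_inner gauss_mean_inner2 gauss_mean_inner3)
qed

lemma T_L_tendsto: "(\<lambda>L. T_L lam x L \<mu>) \<longlonglongrightarrow> T_inf lam S (x 1) \<mu>"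
  by (rule tendsto_vec_componentwise_inner) (unfold T_L_inner, rule emp_tilted_moments_tendsto(1))

text \<open>The derivative of the empirical tilted mean is the empirical tilted covariance, whose limit
  is the covariance \<open>S\<close> of the tilted Gaussian.\<close>
lemma D1_T_L_tendsto: "(\<lambda>L. D1 (T_L lam x L) \<mu> h) \<longlonglongrightarrow> D1 (T_inf lam S (x 1)) \<mu> h"
proof (rule tendsto_vec_componentwise_inner)
  fix u
  let ?M = "\<lambda>L. emp_tilted_mean x L (tilt_vec lam (x 1) \<mu>)" and ?m = "T_inf lam S (x 1) \<mu>"
  let ?w = "tilt_deriv lam (x 1) \<mu> h"
  have "(\<lambda>L. ?M L (\<lambda>y. (y \<bullet> ?w) * (y \<bullet> u)) - ?M L (\<lambda>y. y \<bullet> ?w) * ?M L (\<lambda>y. y \<bullet> u))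
      \<longlonglongrightarrow> ((?m \<bullet> ?w) * (?m \<bullet> u) + ?w \<bullet> (S *v u)) - (?m \<bullet> ?w) * (?m \<bullet> u)"
    by (intro tendsto_intros emp_tilted_moments_tendsto)
  then have "(\<lambda>L. ?M L (\<lambda>y. (y \<bullet> ?w) * (y \<bullet> u)) - ?M L (\<lambda>y. y \<bullet> ?w) * ?M L (\<lambda>y. y \<bullet> u))
      \<longlonglongrightarrow> D1 (T_inf lam S (x 1)) \<mu> h \<bullet> u"
    by (simp add: D1_T_inf inner_S_commute)
  then show "(\<lambda>L. D1 (T_L lam x L) \<mu> h \<bullet> u) \<longlonglongrightarrow> D1 (T_inf lam S (x 1)) \<mu> h \<bullet> u"
    by (rule Lim_transform_eventually)
      (use eventually_ge_at_top[of 1] in \<open>eventually_elim, simp add: D1_T_L_inner\<close>)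
qed

text \<open>Likewise the second derivative is an empirical third cumulant, which vanishes in the
  Gaussian limit; only the term coming from the second derivative of the tilt survives.\<close>
lemma D2_T_L_tendsto: "(\<lambda>L. D2 (T_L lam x L) \<mu> h g) \<longlonglongrightarrow> D2 (T_inf lam S (x 1)) \<mu> h g"
proof (rule tendsto_vec_componentwise_inner)
  fix u
  let ?M = "\<lambda>L. emp_tilted_mean x L (tilt_vec lam (x 1) \<mu>)" and ?m = "T_inf lam S (x 1) \<mu>"
  let ?wh = "tilt_deriv lam (x 1) \<mu> h" and ?wg = "tilt_deriv lam (x 1) \<mu> g"
    and ?z = "tilt_deriv lam (x 1) g h"
  let ?D2 = "\<lambda>L. ?M L (\<lambda>y. (y \<bullet> ?wg) * (y \<bullet> ?wh) * (y \<bullet> u)) + ?M L (\<lambda>y. (y \<bullet> ?z) * (y \<bullet> u))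
    - ?M L (\<lambda>y. y \<bullet> ?wg) * ?M L (\<lambda>y. (y \<bullet> ?wh) * (y \<bullet> u))
    - (?M L (\<lambda>y. (y \<bullet> ?wg) * (y \<bullet> ?wh)) + ?M L (\<lambda>y. y \<bullet> ?z)) * ?M L (\<lambda>y. y \<bullet> u)
    + 2 * ?M L (\<lambda>y. y \<bullet> ?wh) * ?M L (\<lambda>y. y \<bullet> ?wg) * ?M L (\<lambda>y. y \<bullet> u)
    - ?M L (\<lambda>y. y \<bullet> ?wh) * ?M L (\<lambda>y. (y \<bullet> ?wg) * (y \<bullet> u))"
  have "?D2 \<longlonglongrightarrow> ((?m \<bullet> ?wg) * (?m \<bullet> ?wh) * (?m \<bullet> u) + (?m \<bullet> ?wg) * (?wh \<bullet> (S *v u))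
        + (?m \<bullet> ?wh) * (?wg \<bullet> (S *v u)) + (?m \<bullet> u) * (?wg \<bullet> (S *v ?wh)))
      + ((?m \<bullet> ?z) * (?m \<bullet> u) + ?z \<bullet> (S *v u))
      - (?m \<bullet> ?wg) * ((?m \<bullet> ?wh) * (?m \<bullet> u) + ?wh \<bullet> (S *v u))
      - (((?m \<bullet> ?wg) * (?m \<bullet> ?wh) + ?wg \<bullet> (S *v ?wh)) + ?m \<bullet> ?z) * (?m \<bullet> u)
      + 2 * (?m \<bullet> ?wh) * (?m \<bullet> ?wg) * (?m \<bullet> u)
      - (?m \<bullet> ?wh) * ((?m \<bullet> ?wg) * (?m \<bullet> u) + ?wg \<bullet> (S *v u))"
    by (intro tendsto_intros emp_tilted_moments_tendsto)
  then have "?D2 \<longlonglongrightarrow> D2 (T_inf lam S (x 1)) \<mu> h g \<bullet> u"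
    by (simp add: D2_T_inf inner_S_commute algebra_simps)
  then show "(\<lambda>L. D2 (T_L lam x L) \<mu> h g \<bullet> u) \<longlonglongrightarrow> D2 (T_inf lam S (x 1)) \<mu> h g \<bullet> u"
    by (rule Lim_transform_eventually)
      (use eventually_ge_at_top[of 1] in \<open>eventually_elim, simp add: D2_T_L_inner\<close>)
qed

end

end

lemma gaussian_samplesI:
  assumes "prob_space M" "sym_pos_def S" "prob_space.indep_vars M (\<lambda>_. borel) X {1..}"
    and distributed: "\<And>k. k \<ge> 1 \<Longrightarrow> distributed M lborel (X k) (\<lambda>x. ennreal (mvn_density S x))"
  shows "gaussian_samples S M X"
proof -
  interpret prob_space M by (rule assms(1))
  have "(\<integral>\<^sup>+x. ennreal (mvn_density S x) * 1 \<partial>lborel) = (\<integral>\<^sup>+\<omega>. 1 \<partial>M)"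
    by (rule distributed_nn_integral[OF distributed[of 1]]) simp_all
  then have "(\<integral>\<^sup>+x. ennreal (mvn_density S x) \<partial>lborel) = 1"
    using emeasure_space_1 by simp
  then show ?thesis
    using assms unfolding gaussian_samples_def gaussian_samples_axioms_def centered_gaussian_def by auto
qed

lemma (in gaussian_samples) AE_T_L_derivatives_tendsto:
  "AE \<omega> in M. (\<lambda>L. T_L lam (\<lambda>k. X k \<omega>) L \<mu>) \<longlonglongrightarrow> T_inf lam S (X 1 \<omega>) \<mu>
     \<and> (\<forall>h. (\<lambda>L. D1 (T_L lam (\<lambda>k. X k \<omega>) L) \<mu> h) \<longlonglongrightarrow> D1 (T_inf lam S (X 1 \<omega>)) \<mu> h)
     \<and> (\<forall>h g. (\<lambda>L. D2 (T_L lam (\<lambda>k. X k \<omega>) L) \<mu> h g) \<longlonglongrightarrow> D2 (T_inf lam S (X 1 \<omega>)) \<mu> h g)"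
proof -
  define F where "F = (\<lambda>is. inner_monomial (map (\<lambda>i. axis i 1 :: real^'d) is)) ` {is. length is \<le> 3}"
  have "finite F"
    unfolding F_def using finite_lists_length_le[of "UNIV :: 'd set" 3] by simp
  have F_bounded: "exp_bounded f" and F_measurable: "f \<in> borel_measurable borel" if "f \<in> F" for f
    using that exp_bounded_inner_monomial[of _ 0] by (auto simp: F_def)
  have "AE \<omega> in M. \<forall>f\<in>F. \<forall>c. (\<lambda>L. tilted_sum (\<lambda>k. X k \<omega>) L (c *\<^sub>R \<mu>) f / real L)
      \<longlonglongrightarrow> (\<integral>y. dens y * (exp (y \<bullet> (c *\<^sub>R \<mu>)) * f y) \<partial>lborel)"
    unfolding AE_ball_countable[OF countable_finite[OF \<open>finite F\<close>]]
    by (intro ballI AE_tilted_sum_tendsto F_bounded F_measurable)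
  then show ?thesis
  proof (rule AE_mp, intro AE_I2 impI)
    fix \<omega> assume conv: "\<forall>f\<in>F. \<forall>c. (\<lambda>L. tilted_sum (\<lambda>k. X k \<omega>) L (c *\<^sub>R \<mu>) f / real L)
      \<longlonglongrightarrow> (\<integral>y. dens y * (exp (y \<bullet> (c *\<^sub>R \<mu>)) * f y) \<partial>lborel)"
    \<comment> \<open>The tilt parameter depends on \<open>X 1\<close>; this is why \<open>conv\<close> holds for all \<open>c\<close> at once.\<close>
    define c where "c = lam * (X 1 \<omega> \<bullet> \<mu>)"
    have tilt: "tilt_vec lam (X 1 \<omega>) \<mu> = c *\<^sub>R \<mu>" and mean: "T_inf lam S (X 1 \<omega>) \<mu> = S *v (c *\<^sub>R \<mu>)"
      unfolding c_def T_inf_eq_tilt_vec tilt_vec_def by (simp_all add: inner_commute)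
    have "(\<lambda>L. emp_tilted_mean (\<lambda>k. X k \<omega>) L (tilt_vec lam (X 1 \<omega>) \<mu>) (inner_monomial as))
        \<longlonglongrightarrow> gauss_mean (T_inf lam S (X 1 \<omega>) \<mu>) (inner_monomial as)" if "length as \<le> 3" for as
      unfolding tilt mean using that conv by (intro emp_tilted_mean_tendsto_inner_monomial[where n=3]) (auto simp: F_def)
    note limits = T_L_tendsto[OF this] D1_T_L_tendsto[OF this] D2_T_L_tendsto[OF this]
    show "(\<lambda>L. T_L lam (\<lambda>k. X k \<omega>) L \<mu>) \<longlonglongrightarrow> T_inf lam S (X 1 \<omega>) \<mu>
     \<and> (\<forall>h. (\<lambda>L. D1 (T_L lam (\<lambda>k. X k \<omega>) L) \<mu> h) \<longlonglongrightarrow> D1 (T_inf lam S (X 1 \<omega>)) \<mu> h)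
     \<and> (\<forall>h g. (\<lambda>L. D2 (T_L lam (\<lambda>k. X k \<omega>) L) \<mu> h g) \<longlonglongrightarrow> D2 (T_inf lam S (X 1 \<omega>)) \<mu> h g)"
      using limits by simp
  qed
qed

theorem lemma6:
  fixes M :: "'w measure" and X :: "nat \<Rightarrow> 'w \<Rightarrow> real^'d"
    and Sigma :: "real^'d^'d" and mu :: "real^'d" and lam :: real
  assumes "prob_space M"
    and "lam > 0"
    and "sym_pos_def Sigma"
    and "prob_space.indep_vars M (\<lambda>_. borel) X {1..}"
    and "\<And>k. k \<ge> 1 \<Longrightarrow> distributed M lborel (X k) (\<lambda>x. ennreal (mvn_density Sigma x))"
  shows "AE \<omega> in M.
           (\<lambda>L. T_L lam (\<lambda>k. X k \<omega>) L mu) \<longlonglongrightarrow> T_inf lam Sigma (X 1 \<omega>) mu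
         \<and> (\<forall>h. (\<lambda>L. D1 (T_L lam (\<lambda>k. X k \<omega>) L) mu h)
                 \<longlonglongrightarrow> D1 (T_inf lam Sigma (X 1 \<omega>)) mu h)
         \<and> (\<forall>h k. (\<lambda>L. D2 (T_L lam (\<lambda>k. X k \<omega>) L) mu h k)
                 \<longlonglongrightarrow> D2 (T_inf lam Sigma (X 1 \<omega>)) mu h k)"
proof -
  interpret gaussian_samples Sigma M X
    using assms(1,3,4,5) by (rule gaussian_samplesI)
  show ?thesis by (rule AE_T_L_derivatives_tendsto)
qed

end
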